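(* Let $G$ be a cograph. The following procedure always returns a recursively minimal coloring of $G$: Let $(T_G,t_G)$ be the discriminating cotree of $G$. Initially assign pairwise distinct colors to all vertices of $G$. Then traverse the inner vertices $v$ of $T_G$ from bottom to top (every vertex after all its descendants); whenever $t_G(v)=0$, let $\mathcal{G}$ be the set of connected components of $G(v)$, choose $G^*\in\mathcal{G}$ with maximum chromatic number $\chi(G^* )$, set $S:=\sigma(V(G^* ))$, and for every $G_j\in\mathcal{G}$ with $G_j\neq G^*$ choose (arbitrarily) an injective map $\phi:\sigma(V(G_j))\to S$ and replace $\sigma(x)$ by $\phi(\sigma(x))$ for all $x\in V(G_j)$; when $t_G(v)=1$ nothing is done. Moreover, every recursively minimal coloring of $G$ can be obtained as an output of this procedure for suitable choices made in it.
   Context: All graphs are finite, simple and undirected. A (proper vertex) coloring of $G=(V,E)$ is a surjective map $\sigma:V\to S$ with $\sigma(x)\neq\sigma(y)$ whenever $xy\in E$; $\chi(G)$ is the chromatic number. A cograph is a graph that is $K_1$, or a disjoint union of cographs, or a join of cographs. A cotree $(T,t)$ of a cograph $G$ is a rooted tree $T$ with leaf set $V$ and a labeling $t:V^0(T)\to\{0,1\}$ of its inner vertices such that for every inner vertex $u$, $G(u):=G[L(T(u))]$ (with $L(T(u))$ the leaves descending from $u$) is the disjoint union (if $t(u)=0$) or the join (if $t(u)=1$) of the graphs $G(v)$, $v$ a child of $u$. The discriminating cotree of $G$ is the unique cotree in which $t(u)\neq t(v)$ for every edge $uv$ of $T$ between two inner vertices. Color-minimal cographs are colored graphs $(G,\sigma)$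 ($\sigma$ a proper coloring) defined recursively: $(G,\sigma)$ is color-minimal if $|\sigma(V)|=\chi(G)$ and either $G=K_1$, or $G$ is the disjoint union, or the join, of at least two graphs $G_i$ such that each $(G_i,\sigma|_{V(G_i)})$ is a color-minimal cograph. A coloring $\sigma$ of $G$ is recursively minimal if $(G,\sigma)$ is a color-minimal cograph. *)

theory Defs
  imports Main
begin

text \<open>A finite simple graph is given by a finite vertex set V and a symmetric,
irreflexive edge relation E.  Induced subgraphs G[W] are (W, E).\<close>

definition graph :: "('a \<Rightarrow> 'a \<Rightarrow> bool) \<Rightarrow> 'a set \<Rightarrow> bool" where
  "graph E V \<longleftrightarrow> finite V \<and> (\<forall>x y. E x y \<longrightarrow> E y x) \<and> (\<forall>x. \<not> E x x)"

definition proper_coloring :: "('a \<Rightarrow> 'a \<Rightarrow> bool) \<Rightarrow> 'a set \<Rightarrow> ('a \<Rightarrow> 'c) \<Rightarrow> bool" where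
  "proper_coloring E V \<sigma> \<longleftrightarrow> (\<forall>x\<in>V. \<forall>y\<in>V. E x y \<longrightarrow> \<sigma> x \<noteq> \<sigma> y)"

definition chi :: "('a \<Rightarrow> 'a \<Rightarrow> bool) \<Rightarrow> 'a set \<Rightarrow> nat" where
  "chi E V = (LEAST k. \<exists>\<sigma> :: 'a \<Rightarrow> nat. proper_coloring E V \<sigma> \<and> card (\<sigma> ` V) = k)"

definition is_partition :: "'a set set \<Rightarrow> 'a set \<Rightarrow> bool" where
  "is_partition P V \<longleftrightarrow> (\<forall>W\<in>P. W \<noteq> {}) \<and> \<Union>P = V \<and>
     (\<forall>W1\<in>P. \<forall>W2\<in>P. W1 \<noteq> W2 \<longrightarrow> W1 \<inter> W2 = {})"

definition no_edges_between :: "('a \<Rightarrow> 'a \<Rightarrow> bool) \<Rightarrow> 'a set set \<Rightarrow> bool" where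
  "no_edges_between E P \<longleftrightarrow> (\<forall>W1\<in>P. \<forall>W2\<in>P. W1 \<noteq> W2 \<longrightarrow> (\<forall>x\<in>W1. \<forall>y\<in>W2. \<not> E x y))"

definition all_edges_between :: "('a \<Rightarrow> 'a \<Rightarrow> bool) \<Rightarrow> 'a set set \<Rightarrow> bool" where
  "all_edges_between E P \<longleftrightarrow> (\<forall>W1\<in>P. \<forall>W2\<in>P. W1 \<noteq> W2 \<longrightarrow> (\<forall>x\<in>W1. \<forall>y\<in>W2. E x y))"

inductive cograph :: "('a \<Rightarrow> 'a \<Rightarrow> bool) \<Rightarrow> 'a set \<Rightarrow> bool" for E where
  K1: "cograph E {x}"
| union: "\<lbrakk>is_partition P V; card P \<ge> 2; no_edges_between E P; \<forall>W\<in>P. cograph E W\<rbrakk>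
          \<Longrightarrow> cograph E V"
| join: "\<lbrakk>is_partition P V; card P \<ge> 2; all_edges_between E P; \<forall>W\<in>P. cograph E W\<rbrakk>
          \<Longrightarrow> cograph E V"

text \<open>Color-minimal cographs; the colored graph is (G[V], restriction of sigma to V).\<close>

inductive color_minimal :: "('a \<Rightarrow> 'a \<Rightarrow> bool) \<Rightarrow> ('a \<Rightarrow> 'c) \<Rightarrow> 'a set \<Rightarrow> bool"
  for E \<sigma> where
  K1: "color_minimal E \<sigma> {x}"
| union: "\<lbrakk>proper_coloring E V \<sigma>; card (\<sigma> ` V) = chi E V;
           is_partition P V; card P \<ge> 2; no_edges_between E P; \<forall>W\<in>P. color_minimal E \<sigma> W\<rbrakk>
          \<Longrightarrow> color_minimal E \<sigma> V"
| join: "\<lbrakk>proper_coloring E V \<sigma>; card (\<sigma> ` V) = chi E V;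
           is_partition P V; card P \<ge> 2; all_edges_between E P; \<forall>W\<in>P. color_minimal E \<sigma> W\<rbrakk>
          \<Longrightarrow> color_minimal E \<sigma> V"

abbreviation recursively_minimal :: "('a \<Rightarrow> 'a \<Rightarrow> bool) \<Rightarrow> 'a set \<Rightarrow> ('a \<Rightarrow> 'c) \<Rightarrow> bool" where
  "recursively_minimal E V \<sigma> \<equiv> color_minimal E \<sigma> V"

definition component :: "('a \<Rightarrow> 'a \<Rightarrow> bool) \<Rightarrow> 'a set \<Rightarrow> 'a \<Rightarrow> 'a set" where
  "component E W x = {y \<in> W. (x, y) \<in> {(a, b). a \<in> W \<and> b \<in> W \<and> E a b}\<^sup>*}"

definition components :: "('a \<Rightarrow> 'a \<Rightarrow> bool) \<Rightarrow> 'a set \<Rightarrow> 'a set set" where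
  "components E W = component E W ` W"

text \<open>Rooted trees with leaves labelled by vertices and inner vertices labelled
by a boolean: True = 1 (join), False = 0 (disjoint union).\<close>

datatype 'a cotree = Leaf 'a | Inner bool "'a cotree list"

fun leaves :: "'a cotree \<Rightarrow> 'a set" where
  "leaves (Leaf x) = {x}"
| "leaves (Inner b ts) = (\<Union>t\<in>set ts. leaves t)"

fun subtrees :: "'a cotree \<Rightarrow> 'a cotree set" where
  "subtrees (Leaf x) = {Leaf x}"
| "subtrees (Inner b ts) = insert (Inner b ts) (\<Union>t\<in>set ts. subtrees t)"

fun is_inner :: "'a cotree \<Rightarrow> bool" where
  "is_inner (Leaf x) = False"
| "is_inner (Inner b ts) = True"

fun label :: "'a cotree \<Rightarrow> bool" where
  "label (Leaf x) = False"
| "label (Inner b ts) = b"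

fun children :: "'a cotree \<Rightarrow> 'a cotree list" where
  "children (Leaf x) = []"
| "children (Inner b ts) = ts"

definition wf_tree :: "'a cotree \<Rightarrow> bool" where
  "wf_tree T \<longleftrightarrow> (\<forall>u\<in>subtrees T. is_inner u \<longrightarrow>
      length (children u) \<ge> 2 \<and>
      (\<forall>i<length (children u). \<forall>j<length (children u). i \<noteq> j \<longrightarrow>
          leaves (children u ! i) \<inter> leaves (children u ! j) = {}))"

definition is_cotree :: "('a \<Rightarrow> 'a \<Rightarrow> bool) \<Rightarrow> 'a set \<Rightarrow> 'a cotree \<Rightarrow> bool" where
  "is_cotree E V T \<longleftrightarrow> wf_tree T \<and> leaves T = V \<and>
     (\<forall>u\<in>subtrees T. is_inner u \<longrightarrow>
        (\<forall>i<length (children u). \<forall>j<length (children u). i \<noteq> j \<longrightarrow>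
           (\<forall>x\<in>leaves (children u ! i). \<forall>y\<in>leaves (children u ! j). E x y = label u)))"

definition discriminating :: "'a cotree \<Rightarrow> bool" where
  "discriminating T \<longleftrightarrow> (\<forall>u\<in>subtrees T. \<forall>v\<in>set (children u).
      is_inner u \<and> is_inner v \<longrightarrow> label u \<noteq> label v)"

definition is_discriminating_cotree :: "('a \<Rightarrow> 'a \<Rightarrow> bool) \<Rightarrow> 'a set \<Rightarrow> 'a cotree \<Rightarrow> bool" where
  "is_discriminating_cotree E V T \<longleftrightarrow> is_cotree E V T \<and> discriminating T"

definition bottom_up_order :: "'a cotree \<Rightarrow> 'a cotree list \<Rightarrow> bool" where
  "bottom_up_order T vs \<longleftrightarrow> distinct vs \<and> set vs = {u \<in> subtrees T. is_inner u} \<and>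
     (\<forall>i<length vs. \<forall>j<length vs. vs ! i \<in> subtrees (vs ! j) \<and> vs ! i \<noteq> vs ! j \<longrightarrow> i < j)"

definition proc_step :: "('a \<Rightarrow> 'a \<Rightarrow> bool) \<Rightarrow> ('a \<Rightarrow> 'c) \<Rightarrow> 'a cotree \<Rightarrow> ('a \<Rightarrow> 'c) \<Rightarrow> bool" where
  "proc_step E \<sigma> v \<sigma>' \<longleftrightarrow>
     (if label v then \<sigma>' = \<sigma>
      else (let W = leaves v; \<G> = components E W in
        \<exists>Gs\<in>\<G>. (\<forall>C\<in>\<G>. chi E C \<le> chi E Gs) \<and>
          (\<exists>\<phi> :: 'a set \<Rightarrow> 'c \<Rightarrow> 'c.
             (\<forall>C\<in>\<G>. C \<noteq> Gs \<longrightarrow> inj_on (\<phi> C) (\<sigma> ` C) \<and> \<phi> C ` (\<sigma> ` C) \<subseteq> \<sigma> ` Gs) \<and>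
             \<sigma>' = (\<lambda>x. if x \<in> W - Gs then \<phi> (component E W x) (\<sigma> x) else \<sigma> x))))"

inductive proc_run :: "('a \<Rightarrow> 'a \<Rightarrow> bool) \<Rightarrow> ('a \<Rightarrow> 'c) \<Rightarrow> 'a cotree list \<Rightarrow> ('a \<Rightarrow> 'c) \<Rightarrow> bool"
  for E where
  Nil: "proc_run E \<sigma> [] \<sigma>"
| Cons: "\<lbrakk>proc_step E \<sigma> v \<sigma>'; proc_run E \<sigma>' vs \<sigma>''\<rbrakk> \<Longrightarrow> proc_run E \<sigma> (v # vs) \<sigma>''"

definition procedure_output :: "('a \<Rightarrow> 'a \<Rightarrow> bool) \<Rightarrow> 'a set \<Rightarrow> 'a cotree \<Rightarrow> ('a \<Rightarrow> 'c) \<Rightarrow> bool" where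
  "procedure_output E V T \<sigma> \<longleftrightarrow> (\<exists>\<sigma>0 vs. inj_on \<sigma>0 V \<and> bottom_up_order T vs \<and> proc_run E \<sigma>0 vs \<sigma>)"

end

theory Submission
  imports Defs
begin

text \<open>
  A colouring is recursively minimal iff it uses exactly \<open>\<chi>(G(u))\<close> colours on \<open>G(u)\<close> for every
  node \<open>u\<close> of the discriminating cotree. For the nontrivial direction, every part of a
  colour-minimal decomposition is a union of sibling leaf sets of the discriminating cotree: if
  the parts of a decomposition step are pairwise completely joined (resp. non-adjacent), a vertex
  set in which any two vertices are linked by a path of at most two non-edges (resp. edges) lies
  in a single part, and the leaf set of a leaf or of a node of the opposite label, as well as the
  union of at least two siblings below such a node, is of this kind.

  Running the procedure bottom-up keeps every processed node optimal. At a join node the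
  children are optimal and still carry disjoint parts of the injective initial colouring, and
  \<open>\<chi>\<close> is additive over joins. At a union node the other children are mapped into the palette
  of a child of maximum \<open>\<chi>\<close>, which is \<open>\<chi>\<close> of the disjoint union.

  Conversely, for a recursively minimal \<open>\<tau>\<close> the choices at union nodes can be made so that on
  every processed node the current colouring has the same colour classes as \<open>\<tau>\<close>. The final
  colouring is then an injective renaming of \<open>\<tau>\<close>. If the initial colours avoid the palette of
  \<open>\<tau>\<close>, this renaming extends to an injection of all colours, and undoing it throughout the run
  yields \<open>\<tau>\<close> itself.
\<close>

section \<open>Cotrees\<close>

lemma subtrees_refl [simp]: "T \<in> subtrees T"
  by (cases T) auto

lemma subtrees_trans: "u \<in> subtrees T \<Longrightarrow> w \<in> subtrees u \<Longrightarrow> w \<in> subtrees T"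
  by (induction T) auto

lemma children_in_subtrees: "c \<in> set (children u) \<Longrightarrow> c \<in> subtrees u"
  by (cases u) (auto intro: subtrees_refl)

lemma is_inner_if_child: "c \<in> set (children u) \<Longrightarrow> is_inner u"
  by (cases u) auto

lemma not_is_inner_iff: "\<not> is_inner u \<longleftrightarrow> (\<exists>x. u = Leaf x)"
  by (cases u) auto

lemma leaves_subtree: "u \<in> subtrees T \<Longrightarrow> leaves u \<subseteq> leaves T"
  by (induction T) auto

lemma finite_leaves [simp]: "finite (leaves T)"
  by (induction T) auto

lemma finite_subtrees: "finite (subtrees T)"
  by (induction T) auto

lemma leaves_children: "is_inner u \<Longrightarrow> leaves u = (\<Union>c\<in>set (children u). leaves c)"
  by (cases u) auto

lemma subtrees_children: "is_inner u \<Longrightarrow> subtrees u = insert u (\<Union>c\<in>set (children u). subtrees c)"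
  by (cases u) auto

lemma proper_subtree_in_child: "w \<in> subtrees u \<Longrightarrow> w \<noteq> u \<Longrightarrow> \<exists>c\<in>set (children u). w \<in> subtrees c"
  by (cases u) auto

lemma size_child_less: "c \<in> set (children u) \<Longrightarrow> size c < size u"
  by (cases u) (auto intro: size_list_estimation' le_imp_less_Suc)

lemma size_subtree_le: "w \<in> subtrees u \<Longrightarrow> size w \<le> size u"
proof (induction u)
  case (Inner b ts)
  then show ?case
    using size_child_less[of _ "Inner b ts"] by (fastforce dest: less_imp_le)
qed simp

lemma size_proper_subtree_less: "w \<in> subtrees u \<Longrightarrow> w \<noteq> u \<Longrightarrow> size w < size u"
  using proper_subtree_in_child size_subtree_le size_child_less le_less_trans by metis

lemma subtrees_antisym: "w \<in> subtrees u \<Longrightarrow> u \<in> subtrees w \<Longrightarrow> w = u"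
  using size_subtree_le size_proper_subtree_less by fastforce

lemma wf_tree_subtree: "wf_tree T \<Longrightarrow> u \<in> subtrees T \<Longrightarrow> wf_tree u"
  unfolding wf_tree_def using subtrees_trans by blast

lemma wf_tree_length_children: "wf_tree u \<Longrightarrow> is_inner u \<Longrightarrow> 2 \<le> length (children u)"
  unfolding wf_tree_def by auto

lemma wf_tree_children_disjoint:
  assumes "wf_tree u" "c1 \<in> set (children u)" "c2 \<in> set (children u)" "c1 \<noteq> c2"
  shows "leaves c1 \<inter> leaves c2 = {}"
proof -
  obtain i j where "i < length (children u)" "j < length (children u)" "i \<noteq> j"
    "c1 = children u ! i" "c2 = children u ! j"
    using assms(2-4) by (metis in_set_conv_nth)
  then show ?thesis
    using assms(1) is_inner_if_child[OF assms(2)] unfolding wf_tree_def by auto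
qed

lemma wf_tree_leaves_nonempty: "wf_tree u \<Longrightarrow> leaves u \<noteq> {}"
proof (induction u)
  case (Inner b ts)
  then obtain t where "t \<in> set ts"
    using wf_tree_length_children[of "Inner b ts"] by (cases ts) auto
  moreover have "wf_tree t"
    using wf_tree_subtree[OF Inner.prems children_in_subtrees] \<open>t \<in> set ts\<close> by simp
  ultimately show ?case using Inner.IH \<open>t \<in> set ts\<close> by fastforce
qed simp

lemma wf_tree_distinct_children: "wf_tree u \<Longrightarrow> distinct (children u)"
proof (unfold distinct_conv_nth, intro allI impI)
  fix i j assume wf: "wf_tree u" and ij: "i < length (children u)" "j < length (children u)" "i \<noteq> j"
  have "leaves (children u ! i) \<noteq> {}"
    using wf_tree_leaves_nonempty wf_tree_subtree[OF wf children_in_subtrees] ij(1) nth_mem by blast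
  moreover have "leaves (children u ! i) \<inter> leaves (children u ! j) = {}"
    using wf ij is_inner_if_child[of "children u ! i" u] unfolding wf_tree_def by auto
  ultimately show "children u ! i \<noteq> children u ! j" by auto
qed

lemma wf_tree_card_children: "wf_tree u \<Longrightarrow> is_inner u \<Longrightarrow> 2 \<le> card (set (children u))"
  using wf_tree_length_children wf_tree_distinct_children distinct_card by metis

lemma wf_tree_other_child:
  assumes "wf_tree u" "c \<in> set (children u)"
  obtains c' where "c' \<in> set (children u)" "c' \<noteq> c"
proof -
  have "\<not> set (children u) \<subseteq> {c}"
  proof
    assume "set (children u) \<subseteq> {c}"
    then have "card (set (children u)) \<le> 1"
      using card_mono[of "{c}"] by simp
    then show False
      using wf_tree_card_children[OF assms(1) is_inner_if_child[OF assms(2)]] by simp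
  qed
  then show ?thesis using that by blast
qed

lemma wf_tree_laminar:
  "wf_tree T \<Longrightarrow> u \<in> subtrees T \<Longrightarrow> w \<in> subtrees T \<Longrightarrow>
     u \<in> subtrees w \<or> w \<in> subtrees u \<or> leaves u \<inter> leaves w = {}"
proof (induction T arbitrary: u w)
  case (Inner b ts)
  show ?case
  proof (cases "u = Inner b ts \<or> w = Inner b ts")
    case False
    then obtain t1 t2 where t: "t1 \<in> set ts" "u \<in> subtrees t1" "t2 \<in> set ts" "w \<in> subtrees t2"
      using Inner.prems by auto
    show ?thesis
    proof (cases "t1 = t2")
      case True
      have "wf_tree t1" using wf_tree_subtree[OF Inner.prems(1) children_in_subtrees] t(1) by simp
      then show ?thesis using Inner.IH t True by blast
    next
      case False
      then have "leaves t1 \<inter> leaves t2 = {}"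
        using wf_tree_children_disjoint[OF Inner.prems(1)] t by simp
      then show ?thesis using leaves_subtree t by blast
    qed
  qed (use Inner.prems in auto)
qed simp

lemma wf_tree_leaves_singleton: "wf_tree u \<Longrightarrow> leaves u \<subseteq> {x} \<Longrightarrow> u = Leaf x"
proof (cases u)
  case (Inner b ts)
  assume wf: "wf_tree u" and sub: "leaves u \<subseteq> {x}"
  obtain c where c: "c \<in> set (children u)"
    using wf_tree_length_children[OF wf] Inner by (cases ts) auto
  obtain c' where c': "c' \<in> set (children u)" "c' \<noteq> c"
    using wf_tree_other_child[OF wf c] .
  have "leaves c \<inter> leaves c' = {}"
    using wf_tree_children_disjoint[OF wf c c'(1)] c'(2) by blast
  moreover have "leaves c \<noteq> {}" "leaves c' \<noteq> {}"
    using c c' wf wf_tree_leaves_nonempty wf_tree_subtree children_in_subtrees by blast+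
  moreover have "leaves c \<subseteq> {x}" "leaves c' \<subseteq> {x}"
    using sub Inner c c' by auto
  ultimately show ?thesis by blast
qed auto

lemma bottom_up_order_exists: "\<exists>vs. bottom_up_order T vs"
proof -
  have "finite {u \<in> subtrees T. is_inner u}"
    using finite_subtrees by (rule finite_subset[rotated]) blast
  then obtain xs where xs: "set xs = {u \<in> subtrees T. is_inner u}" "distinct xs"
    using finite_distinct_list by blast
  define vs where "vs = sort_key size xs"
  have "i < j" if "i < length vs" "j < length vs" "vs ! i \<in> subtrees (vs ! j)" "vs ! i \<noteq> vs ! j"
    for i j
  proof (rule ccontr)
    assume "\<not> i < j"
    then have "size (vs ! j) \<le> size (vs ! i)"
      using sorted_nth_mono[of "map size vs" j i] that(1) unfolding vs_def by simp
    then show False using size_proper_subtree_less that(3,4) by fastforce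
  qed
  moreover have "distinct vs" "set vs = {u \<in> subtrees T. is_inner u}"
    using xs unfolding vs_def by simp_all
  ultimately show ?thesis unfolding bottom_up_order_def by blast
qed

section \<open>Optimal colourings\<close>

lemma proper_coloring_subset: "proper_coloring E B \<sigma> \<Longrightarrow> A \<subseteq> B \<Longrightarrow> proper_coloring E A \<sigma>"
  unfolding proper_coloring_def by blast

lemma proper_coloring_inj_on: "\<forall>x\<in>W. \<not> E x x \<Longrightarrow> inj_on \<sigma> W \<Longrightarrow> proper_coloring E W \<sigma>"
  unfolding proper_coloring_def inj_on_def by metis

lemma proper_coloring_comp:
  "proper_coloring E W \<sigma> \<Longrightarrow> inj_on g (\<sigma> ` W) \<Longrightarrow> proper_coloring E W (g \<circ> \<sigma>)"
  unfolding proper_coloring_def inj_on_def by auto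

lemma chi_le_card:
  assumes "finite W" "proper_coloring E W \<sigma>"
  shows "chi E W \<le> card (\<sigma> ` W)"
proof -
  obtain g where g: "bij_betw g (\<sigma> ` W) {0..<card (\<sigma> ` W)}"
    using ex_bij_betw_finite_nat assms(1) by blast
  then have "inj_on g (\<sigma> ` W)" by (rule bij_betw_imp_inj_on)
  moreover have "(g \<circ> \<sigma>) ` W = g ` \<sigma> ` W" by (simp add: image_comp)
  ultimately have "proper_coloring E W (g \<circ> \<sigma>)" "card ((g \<circ> \<sigma>) ` W) = card (\<sigma> ` W)"
    using proper_coloring_comp[OF assms(2)] by (simp_all add: card_image)
  then show ?thesis unfolding chi_def by (metis (mono_tags, lifting) Least_le)
qed

lemma chi_attained:
  assumes "finite W" "\<forall>x\<in>W. \<not> E x x"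
  obtains \<nu> :: "'a \<Rightarrow> nat" where "proper_coloring E W \<nu>" "card (\<nu> ` W) = chi E W"
proof -
  obtain f :: "'a \<Rightarrow> nat" where "inj_on f W"
    using finite_imp_inj_to_nat_seg[OF assms(1)] by blast
  then have "\<exists>k \<nu>. proper_coloring E W (\<nu> :: 'a \<Rightarrow> nat) \<and> card (\<nu> ` W) = k"
    using proper_coloring_inj_on[of W E, OF assms(2)] by blast
  then have "\<exists>\<nu> :: 'a \<Rightarrow> nat. proper_coloring E W \<nu> \<and> card (\<nu> ` W) = chi E W"
    unfolding chi_def by (rule LeastI_ex)
  then show ?thesis using that by blast
qed

lemma proper_coloring_lessThan_chi:
  assumes "finite W" "\<forall>x\<in>W. \<not> E x x"
  obtains \<nu> :: "'a \<Rightarrow> nat" where "proper_coloring E W \<nu>" "\<nu> ` W \<subseteq> {..<chi E W}"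
proof -
  obtain \<nu> :: "'a \<Rightarrow> nat" where \<nu>: "proper_coloring E W \<nu>" "card (\<nu> ` W) = chi E W"
    using chi_attained[of W E, OF assms] .
  obtain g where g: "bij_betw g (\<nu> ` W) {..<chi E W}"
    using ex_bij_betw_finite_nat[of "\<nu> ` W"] assms(1) \<nu>(2) by (auto simp: atLeast0LessThan)
  moreover have "(g \<circ> \<nu>) ` W = g ` \<nu> ` W" by (simp add: image_comp)
  ultimately have "proper_coloring E W (g \<circ> \<nu>)" "(g \<circ> \<nu>) ` W \<subseteq> {..<chi E W}"
    using proper_coloring_comp[OF \<nu>(1) bij_betw_imp_inj_on[OF g]] bij_betw_imp_surj_on[OF g]
    by simp_all
  then show ?thesis using that by blast
qed

lemma chi_mono:
  assumes "finite B" "A \<subseteq> B" "\<forall>x\<in>B. \<not> E x x"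
  shows "chi E A \<le> chi E B"
proof -
  obtain \<nu> :: "'a \<Rightarrow> nat" where \<nu>: "proper_coloring E B \<nu>" "card (\<nu> ` B) = chi E B"
    using chi_attained[of B E, OF assms(1,3)] .
  have "chi E A \<le> card (\<nu> ` A)"
    using chi_le_card[OF finite_subset[OF assms(2,1)] proper_coloring_subset[OF \<nu>(1) assms(2)]] .
  also have "\<dots> \<le> card (\<nu> ` B)" using assms by (intro card_mono) auto
  finally show ?thesis using \<nu>(2) by simp
qed

lemma chi_singleton: "\<not> E x x \<Longrightarrow> chi E {x} = 1"
proof -
  assume "\<not> E x x"
  then obtain \<nu> :: "'a \<Rightarrow> nat" where "card (\<nu> ` {x}) = chi E {x}"
    using chi_attained[of "{x}" E] by blast
  then show ?thesis by simp
qed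

definition optimal_coloring :: "('a \<Rightarrow> 'a \<Rightarrow> bool) \<Rightarrow> 'a set \<Rightarrow> ('a \<Rightarrow> 'c) \<Rightarrow> bool" where
  "optimal_coloring E W \<sigma> \<longleftrightarrow> proper_coloring E W \<sigma> \<and> card (\<sigma> ` W) = chi E W"

lemma optimal_coloring_singleton: "\<not> E x x \<Longrightarrow> optimal_coloring E {x} \<sigma>"
  unfolding optimal_coloring_def proper_coloring_def by (simp add: chi_singleton)

lemma color_minimal_optimal_coloring:
  "color_minimal E \<sigma> W \<Longrightarrow> \<forall>x. \<not> E x x \<Longrightarrow> optimal_coloring E W \<sigma>"
proof (induction rule: color_minimal.induct)
  case (K1 x)
  then show ?case by (simp add: optimal_coloring_singleton)
qed (simp_all add: optimal_coloring_def)

definition same_color_classes :: "'a set \<Rightarrow> ('a \<Rightarrow> 'c) \<Rightarrow> ('a \<Rightarrow> 'd) \<Rightarrow> bool" where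
  "same_color_classes W \<sigma> \<sigma>' \<longleftrightarrow> (\<forall>x\<in>W. \<forall>y\<in>W. \<sigma> x = \<sigma> y \<longleftrightarrow> \<sigma>' x = \<sigma>' y)"

lemma same_color_classes_if_renaming:
  "inj_on f (\<sigma> ` W) \<Longrightarrow> \<forall>x\<in>W. \<sigma>' x = f (\<sigma> x) \<Longrightarrow> same_color_classes W \<sigma> \<sigma>'"
  unfolding same_color_classes_def inj_on_def by auto

lemma same_color_classes_inv_into:
  assumes "same_color_classes W \<sigma> \<sigma>'" "x \<in> W"
  shows "\<sigma>' (inv_into W \<sigma> (\<sigma> x)) = \<sigma>' x"
  using assms inv_into_into[of "\<sigma> x" \<sigma> W] f_inv_into_f[of "\<sigma> x" \<sigma> W]
  unfolding same_color_classes_def by auto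

lemma same_color_classes_renaming:
  assumes "same_color_classes W \<sigma> \<sigma>'"
  obtains f where "inj_on f (\<sigma> ` W)" "\<forall>x\<in>W. \<sigma>' x = f (\<sigma> x)"
proof
  let ?f = "\<lambda>c. \<sigma>' (inv_into W \<sigma> c)"
  show f: "\<forall>x\<in>W. \<sigma>' x = ?f (\<sigma> x)"
    using same_color_classes_inv_into[OF assms] by simp
  show "inj_on ?f (\<sigma> ` W)"
  proof (rule inj_onI)
    fix a b assume "a \<in> \<sigma> ` W" "b \<in> \<sigma> ` W" "?f a = ?f b"
    then obtain x y where "x \<in> W" "y \<in> W" "a = \<sigma> x" "b = \<sigma> y" "\<sigma>' x = \<sigma>' y"
      using f by auto
    then show "a = b" using assms unfolding same_color_classes_def by blast
  qed
qed

lemma same_color_classes_eq_on: "\<forall>x\<in>W. \<sigma>' x = \<sigma> x \<Longrightarrow> same_color_classes W \<sigma> \<sigma>'"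
  unfolding same_color_classes_def by simp

lemma same_color_classes_sym: "same_color_classes W \<sigma> \<sigma>' \<Longrightarrow> same_color_classes W \<sigma>' \<sigma>"
  unfolding same_color_classes_def by blast

lemma same_color_classes_subset:
  "same_color_classes W \<sigma> \<sigma>' \<Longrightarrow> A \<subseteq> W \<Longrightarrow> same_color_classes A \<sigma> \<sigma>'"
  unfolding same_color_classes_def by blast

lemma same_color_classes_trans:
  "same_color_classes W \<sigma> \<sigma>' \<Longrightarrow> same_color_classes W \<sigma>' \<sigma>'' \<Longrightarrow> same_color_classes W \<sigma> \<sigma>''"
  unfolding same_color_classes_def by blast

lemma optimal_coloring_same_classes:
  assumes "optimal_coloring E W \<sigma>" "same_color_classes W \<sigma> \<sigma>'"
  shows "optimal_coloring E W \<sigma>'"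
proof -
  obtain f where f: "inj_on f (\<sigma> ` W)" "\<forall>x\<in>W. \<sigma>' x = f (\<sigma> x)"
    using same_color_classes_renaming[OF assms(2)] .
  then have "\<sigma>' ` W = f ` \<sigma> ` W" by (auto simp: image_iff)
  then have "card (\<sigma>' ` W) = card (\<sigma> ` W)" using f(1) by (simp add: card_image)
  moreover have "proper_coloring E W \<sigma>'"
    using assms unfolding optimal_coloring_def proper_coloring_def same_color_classes_def by blast
  ultimately show ?thesis using assms(1) unfolding optimal_coloring_def by simp
qed

lemma same_color_classes_recolor:
  assumes classes: "same_color_classes A \<tau> \<sigma>" and sub: "\<tau> ` A \<subseteq> \<tau> ` B"
    and G: "inj_on G (\<tau> ` B)" "\<forall>x\<in>B. \<sigma> x = G (\<tau> x)"
  obtains \<phi> where "inj_on \<phi> (\<sigma> ` A)" "\<phi> ` \<sigma> ` A \<subseteq> \<sigma> ` B" "\<forall>x\<in>A. \<phi> (\<sigma> x) = G (\<tau> x)"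
proof -
  obtain F where F: "inj_on F (\<sigma> ` A)" "\<forall>x\<in>A. \<tau> x = F (\<sigma> x)"
    using same_color_classes_renaming[OF same_color_classes_sym[OF classes]] .
  have F_image: "F ` \<sigma> ` A = \<tau> ` A" using F(2) by (auto simp: image_image cong: image_cong)
  show ?thesis
  proof (rule that[of "G \<circ> F"])
    show "inj_on (G \<circ> F) (\<sigma> ` A)"
      using comp_inj_on[OF F(1)] inj_on_subset[OF G(1) sub] F_image by simp
    have "(G \<circ> F) ` \<sigma> ` A = G ` \<tau> ` A" unfolding image_comp[symmetric] F_image ..
    also have "\<dots> \<subseteq> G ` \<tau> ` B" using sub by (rule image_mono)
    also have "\<dots> = \<sigma> ` B" using G(2) by (auto simp: image_image cong: image_cong)
    finally show "(G \<circ> F) ` \<sigma> ` A \<subseteq> \<sigma> ` B" .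
    show "\<forall>x\<in>A. (G \<circ> F) (\<sigma> x) = G (\<tau> x)" using F(2) by simp
  qed
qed

lemma same_color_classes_Union:
  assumes "\<forall>A\<in>P. same_color_classes A \<tau> \<sigma>"
    and "\<forall>A\<in>P. \<forall>B\<in>P. A \<noteq> B \<longrightarrow> \<tau> ` A \<inter> \<tau> ` B = {}"
    and "\<forall>A\<in>P. \<forall>B\<in>P. A \<noteq> B \<longrightarrow> \<sigma> ` A \<inter> \<sigma> ` B = {}"
  shows "same_color_classes (\<Union>P) \<tau> \<sigma>"
  unfolding same_color_classes_def
proof (intro ballI)
  fix x y assume "x \<in> \<Union>P" "y \<in> \<Union>P"
  then obtain A B where A: "A \<in> P" "x \<in> A" and B: "B \<in> P" "y \<in> B" by blast
  show "\<tau> x = \<tau> y \<longleftrightarrow> \<sigma> x = \<sigma> y"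
  proof (cases "A = B")
    case True
    have "same_color_classes A \<tau> \<sigma>" using assms(1) A(1) by blast
    then show ?thesis using A B True unfolding same_color_classes_def by simp
  next
    case False
    then have "\<tau> x \<noteq> \<tau> y" "\<sigma> x \<noteq> \<sigma> y" using assms(2,3) A B by blast+
    then show ?thesis by simp
  qed
qed

lemma finite_partition:
  assumes "finite W" "is_partition P W"
  shows "finite P"
proof -
  have "P \<subseteq> Pow W" using assms(2) unfolding is_partition_def by blast
  then show ?thesis using assms(1) finite_subset by blast
qed

lemma partition_part_unique:
  "is_partition P W \<Longrightarrow> A \<in> P \<Longrightarrow> B \<in> P \<Longrightarrow> x \<in> A \<Longrightarrow> x \<in> B \<Longrightarrow> A = B"
  unfolding is_partition_def by blast

lemma card_image_partition:
  assumes "finite W" "is_partition P W"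
    and "\<forall>A\<in>P. \<forall>B\<in>P. A \<noteq> B \<longrightarrow> \<sigma> ` A \<inter> \<sigma> ` B = {}"
  shows "card (\<sigma> ` W) = (\<Sum>A\<in>P. card (\<sigma> ` A))"
proof -
  have W: "W = \<Union>P" using assms(2) unfolding is_partition_def by blast
  then have "\<forall>A\<in>P. finite (\<sigma> ` A)"
    using assms(1) by (metis Union_upper finite_imageI finite_subset)
  then have "card (\<Union>A\<in>P. \<sigma> ` A) = (\<Sum>A\<in>P. card (\<sigma> ` A))"
    by (rule card_UN_disjoint[OF finite_partition[OF assms(1,2)] _ assms(3)])
  moreover have "\<sigma> ` W = (\<Union>A\<in>P. \<sigma> ` A)" using W by blast
  ultimately show ?thesis by simp
qed

lemma proper_coloring_join_disjoint:
  assumes "proper_coloring E W \<sigma>" "is_partition P W" "all_edges_between E P"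
    and "A \<in> P" "B \<in> P" "A \<noteq> B"
  shows "\<sigma> ` A \<inter> \<sigma> ` B = {}"
proof (rule ccontr)
  assume "\<sigma> ` A \<inter> \<sigma> ` B \<noteq> {}"
  then obtain x y where xy: "x \<in> A" "y \<in> B" "\<sigma> x = \<sigma> y" by blast
  then have "E x y" using assms(3-6) unfolding all_edges_between_def by blast
  moreover have "x \<in> W" "y \<in> W" using xy assms(2,4,5) unfolding is_partition_def by blast+
  ultimately show False using assms(1) xy(3) unfolding proper_coloring_def by blast
qed

lemma proper_coloring_partition:
  assumes "is_partition P W" "\<forall>A\<in>P. proper_coloring E A \<sigma>"
    and "\<forall>A\<in>P. \<forall>B\<in>P. A \<noteq> B \<longrightarrow> (\<forall>x\<in>A. \<forall>y\<in>B. E x y \<longrightarrow> \<sigma> x \<noteq> \<sigma> y)"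
  shows "proper_coloring E W \<sigma>"
  unfolding proper_coloring_def
proof (intro ballI impI)
  fix x y assume "x \<in> W" "y \<in> W" "E x y"
  then obtain A B where AB: "A \<in> P" "B \<in> P" "x \<in> A" "y \<in> B"
    using assms(1) unfolding is_partition_def by blast
  show "\<sigma> x \<noteq> \<sigma> y"
  proof (cases "A = B")
    case True
    have "proper_coloring E A \<sigma>" using assms(2) AB(1) by blast
    then show ?thesis using AB(3,4) True \<open>E x y\<close> unfolding proper_coloring_def by blast
  next
    case False
    show ?thesis using assms(3)[rule_format, OF AB(1,2) False AB(3,4) \<open>E x y\<close>] .
  qed
qed

lemma optimal_coloring_join:
  assumes "finite W" "\<forall>x\<in>W. \<not> E x x" "is_partition P W" "all_edges_between E P"
    and opt: "\<forall>A\<in>P. optimal_coloring E A \<sigma>"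
    and disj: "\<forall>A\<in>P. \<forall>B\<in>P. A \<noteq> B \<longrightarrow> \<sigma> ` A \<inter> \<sigma> ` B = {}"
  shows "optimal_coloring E W \<sigma>"
proof -
  have "\<forall>A\<in>P. proper_coloring E A \<sigma>" using opt unfolding optimal_coloring_def by blast
  moreover have "\<forall>A\<in>P. \<forall>B\<in>P. A \<noteq> B \<longrightarrow> (\<forall>x\<in>A. \<forall>y\<in>B. E x y \<longrightarrow> \<sigma> x \<noteq> \<sigma> y)"
    using disj by blast
  ultimately have proper: "proper_coloring E W \<sigma>" by (rule proper_coloring_partition[OF assms(3)])
  obtain \<nu> :: "'a \<Rightarrow> nat" where \<nu>: "proper_coloring E W \<nu>" "card (\<nu> ` W) = chi E W"
    using chi_attained[of W E, OF assms(1,2)] .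
  have sub: "A \<subseteq> W" if "A \<in> P" for A
    using that assms(3) unfolding is_partition_def by blast
  have "\<forall>A\<in>P. \<forall>B\<in>P. A \<noteq> B \<longrightarrow> \<nu> ` A \<inter> \<nu> ` B = {}"
    using proper_coloring_join_disjoint[OF \<nu>(1) assms(3,4)] by blast
  note card_\<nu> = card_image_partition[OF assms(1,3) this]
  have "card (\<sigma> ` W) = (\<Sum>A\<in>P. card (\<sigma> ` A))"
    using card_image_partition[OF assms(1,3) disj] .
  also have "\<dots> = (\<Sum>A\<in>P. chi E A)"
    using opt unfolding optimal_coloring_def by (intro sum.cong) simp_all
  also have "\<dots> \<le> (\<Sum>A\<in>P. card (\<nu> ` A))"
  proof (rule sum_mono)
    fix A assume A: "A \<in> P"
    show "chi E A \<le> card (\<nu> ` A)"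
      using chi_le_card[OF finite_subset[OF sub[OF A] assms(1)]
          proper_coloring_subset[OF \<nu>(1) sub[OF A]]] .
  qed
  also have "\<dots> = chi E W"
    using card_\<nu> \<nu>(2) by simp
  finally show ?thesis
    using chi_le_card[OF assms(1) proper] proper unfolding optimal_coloring_def by simp
qed

lemma optimal_coloring_union:
  assumes "finite W" "\<forall>x\<in>W. \<not> E x x" "is_partition P W" "no_edges_between E P"
    and proper: "\<forall>A\<in>P. proper_coloring E A \<sigma>"
    and "A \<in> P" "optimal_coloring E A \<sigma>" "\<sigma> ` W \<subseteq> \<sigma> ` A"
  shows "optimal_coloring E W \<sigma>"
proof -
  have AW: "A \<subseteq> W" using assms(3,6) unfolding is_partition_def by blast
  have "proper_coloring E W \<sigma>"
    using assms(4) unfolding no_edges_between_def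
    by (intro proper_coloring_partition[OF assms(3) proper]) blast
  moreover have "card (\<sigma> ` W) \<le> chi E W"
    using card_mono[OF finite_imageI[OF finite_subset[OF AW assms(1)]] assms(8)]
      chi_mono[of W A E, OF assms(1) AW assms(2)] assms(7)
    unfolding optimal_coloring_def by simp
  ultimately show ?thesis
    using chi_le_card[of W E \<sigma>, OF assms(1)] unfolding optimal_coloring_def by simp
qed

lemma chi_union_le:
  assumes "finite W" "\<forall>x\<in>W. \<not> E x x" "is_partition P W" "no_edges_between E P"
    and "\<forall>A\<in>P. chi E A \<le> k"
  shows "chi E W \<le> k"
proof -
  have sub: "A \<subseteq> W" if "A \<in> P" for A
    using that assms(3) unfolding is_partition_def by blast
  have "\<forall>A\<in>P. \<exists>\<nu> :: 'a \<Rightarrow> nat. proper_coloring E A \<nu> \<and> \<nu> ` A \<subseteq> {..<chi E A}"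
  proof
    fix A assume "A \<in> P"
    then have "finite A" "\<forall>x\<in>A. \<not> E x x" using sub assms(1,2) finite_subset by blast+
    then show "\<exists>\<nu> :: 'a \<Rightarrow> nat. proper_coloring E A \<nu> \<and> \<nu> ` A \<subseteq> {..<chi E A}"
      using proper_coloring_lessThan_chi[of A E] by blast
  qed
  then obtain N where N: "\<forall>A\<in>P. proper_coloring E A (N A) \<and> N A ` A \<subseteq> {..<chi E A}"
    by (metis bchoice)
  define part where "part x = (SOME A. A \<in> P \<and> x \<in> A)" for x
  have part: "part x \<in> P \<and> x \<in> part x" if "x \<in> W" for x
    unfolding part_def
    by (rule someI_ex) (use that assms(3) in \<open>auto simp: is_partition_def\<close>)
  define \<mu> where "\<mu> x = N (part x) x" for x
  have "proper_coloring E W \<mu>"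
    unfolding proper_coloring_def
  proof (intro ballI impI)
    fix x y assume x: "x \<in> W" and y: "y \<in> W" and "E x y"
    then have "part x = part y"
      using part[OF x] part[OF y] assms(4) unfolding no_edges_between_def by blast
    then show "\<mu> x \<noteq> \<mu> y"
      using N part[OF x] part[OF y] \<open>E x y\<close> unfolding \<mu>_def proper_coloring_def by simp
  qed
  moreover have "\<mu> ` W \<subseteq> {..<k}"
    using N part assms(5) unfolding \<mu>_def by fastforce
  ultimately show ?thesis
    using chi_le_card[OF assms(1)] card_mono[of "{..<k}" "\<mu> ` W"] by fastforce
qed

lemma optimal_coloring_union_max_part:
  assumes "finite W" "\<forall>x\<in>W. \<not> E x x" "is_partition P W" "no_edges_between E P"
    and "optimal_coloring E W \<tau>" "A \<in> P" "optimal_coloring E A \<tau>"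
    and "\<forall>B\<in>P. chi E B \<le> chi E A"
  shows "\<tau> ` A = \<tau> ` W"
proof -
  have AW: "\<tau> ` A \<subseteq> \<tau> ` W" using assms(3,6) unfolding is_partition_def by blast
  have "card (\<tau> ` W) \<le> card (\<tau> ` A)"
    using chi_union_le[OF assms(1-4,8)] assms(5,7) unfolding optimal_coloring_def by simp
  then show ?thesis
    using card_subset_eq[OF _ AW] assms(1) card_mono[OF _ AW] by simp
qed

definition diameter_le_2 :: "('a \<Rightarrow> 'a \<Rightarrow> bool) \<Rightarrow> 'a set \<Rightarrow> bool" where
  "diameter_le_2 R S \<longleftrightarrow> (\<forall>x\<in>S. \<forall>y\<in>S. x = y \<or> R x y \<or> (\<exists>z\<in>S. R x z \<and> R z y))"

lemma diameter_le_2_within_part: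
  assumes P: "is_partition P W" and cross: "\<forall>A\<in>P. \<forall>B\<in>P. A \<noteq> B \<longrightarrow> (\<forall>x\<in>A. \<forall>y\<in>B. \<not> R x y)"
    and S: "S \<subseteq> W" "S \<noteq> {}" "diameter_le_2 R S"
  obtains A where "A \<in> P" "S \<subseteq> A"
proof -
  have part: "\<exists>A\<in>P. x \<in> A" if "x \<in> W" for x
    using that P unfolding is_partition_def by blast
  have same: "A = B" if "A \<in> P" "B \<in> P" "x \<in> A" "y \<in> B" "x = y \<or> R x y" for A B x y
  proof (rule ccontr)
    assume "A \<noteq> B"
    then have "x \<noteq> y" using partition_part_unique[OF P that(1,2)] that(3,4) by blast
    moreover have "\<not> R x y" using cross that(1-4) \<open>A \<noteq> B\<close> by blast
    ultimately show False using that(5) by blast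
  qed
  obtain x0 where "x0 \<in> S" using S(2) by blast
  then obtain A where A: "A \<in> P" "x0 \<in> A" using part S(1) by blast
  have "y \<in> A" if "y \<in> S" for y
  proof -
    obtain B where B: "B \<in> P" "y \<in> B" using part S(1) \<open>y \<in> S\<close> by blast
    have "x0 = y \<or> R x0 y \<or> (\<exists>z\<in>S. R x0 z \<and> R z y)"
      using S(3) \<open>x0 \<in> S\<close> \<open>y \<in> S\<close> unfolding diameter_le_2_def by blast
    then have "A = B"
    proof (elim disjE bexE conjE)
      fix z assume "z \<in> S" "R x0 z" "R z y"
      then obtain C where C: "C \<in> P" "z \<in> C" using part S(1) by blast
      show "A = B"
        using same[OF A(1) C(1) A(2) C(2)] same[OF C(1) B(1) C(2) B(2)] \<open>R x0 z\<close> \<open>R z y\<close>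
        by simp
    qed (use same A B in blast)+
    then show ?thesis using B by simp
  qed
  then show ?thesis using that A(1) by blast
qed

lemma partition_not_diameter_le_2:
  assumes P: "is_partition P W" "2 \<le> card P"
    and cross: "\<forall>A\<in>P. \<forall>B\<in>P. A \<noteq> B \<longrightarrow> (\<forall>x\<in>A. \<forall>y\<in>B. \<not> R x y)"
  shows "\<not> diameter_le_2 R W"
proof
  assume diam: "diameter_le_2 R W"
  have part: "B \<noteq> {} \<and> B \<subseteq> W" if "B \<in> P" for B
    using P(1) that unfolding is_partition_def by blast
  have "P \<noteq> {}" using P(2) by auto
  then have "W \<noteq> {}" using part by blast
  then obtain A where A: "A \<in> P" "W \<subseteq> A"
    using diameter_le_2_within_part[OF P(1) cross order_refl _ diam] by blast
  have "\<not> P \<subseteq> {A}"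
  proof
    assume "P \<subseteq> {A}"
    then have "card P \<le> 1" using card_mono[of "{A}" P] by simp
    then show False using P(2) by simp
  qed
  then obtain B where B: "B \<in> P" "B \<noteq> A" by blast
  then have "A \<inter> B = {}" using P(1) A(1) unfolding is_partition_def by blast
  then show False using part[OF B(1)] A(2) by blast
qed

section \<open>The procedure on a discriminating cotree\<close>

lemma proc_step_join: "label v \<Longrightarrow> proc_step E \<sigma> v \<sigma>' \<longleftrightarrow> \<sigma>' = \<sigma>"
  unfolding proc_step_def by simp

lemma inj_on_conjugate:
  assumes "inj h" "inj_on \<phi> S"
  shows "inj_on (h \<circ> \<phi> \<circ> inv h) (h ` S)"
proof (rule comp_inj_on)
  show "inj_on (inv h) (h ` S)" by (rule inj_on_inv_into) blast
  show "inj_on (h \<circ> \<phi>) (inv h ` h ` S)"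
    using comp_inj_on[OF assms(2) inj_on_subset[OF assms(1)]] image_inv_f_f[OF assms(1)] by simp
qed

lemma image_conjugate: "inj h \<Longrightarrow> (h \<circ> \<phi> \<circ> inv h) ` h ` S = h ` \<phi> ` S"
  by (simp only: image_comp[symmetric] image_inv_f_f)

lemma proc_step_rename:
  assumes h: "inj h" and step: "proc_step E \<sigma> v \<sigma>'"
  shows "proc_step E (h \<circ> \<sigma>) v (h \<circ> \<sigma>')"
proof (cases "label v")
  case True
  then show ?thesis using step by (simp add: proc_step_join)
next
  case False
  let ?W = "leaves v" and ?G = "components E (leaves v)"
  obtain Gs \<phi> where Gs: "Gs \<in> ?G" "\<forall>C\<in>?G. chi E C \<le> chi E Gs"
    and \<phi>: "\<forall>C\<in>?G. C \<noteq> Gs \<longrightarrow> inj_on (\<phi> C) (\<sigma> ` C) \<and> \<phi> C ` (\<sigma> ` C) \<subseteq> \<sigma> ` Gs"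
    and \<sigma>': "\<sigma>' = (\<lambda>x. if x \<in> ?W - Gs then \<phi> (component E ?W x) (\<sigma> x) else \<sigma> x)"
    using step False unfolding proc_step_def Let_def by auto
  define \<psi> where "\<psi> C = h \<circ> \<phi> C \<circ> inv h" for C
  have "inj_on (\<psi> C) ((h \<circ> \<sigma>) ` C) \<and> \<psi> C ` ((h \<circ> \<sigma>) ` C) \<subseteq> (h \<circ> \<sigma>) ` Gs"
    if "C \<in> ?G" "C \<noteq> Gs" for C
  proof -
    have "inj_on (\<phi> C) (\<sigma> ` C)" "\<phi> C ` \<sigma> ` C \<subseteq> \<sigma> ` Gs" using \<phi> that by blast+
    moreover have "(h \<circ> \<sigma>) ` X = h ` \<sigma> ` X" for X by (simp add: image_comp)
    ultimately show ?thesis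
      unfolding \<psi>_def using inj_on_conjugate[OF h] image_conjugate[OF h] by (simp add: image_mono)
  qed
  moreover have "h \<circ> \<sigma>' =
      (\<lambda>x. if x \<in> ?W - Gs then \<psi> (component E ?W x) ((h \<circ> \<sigma>) x) else (h \<circ> \<sigma>) x)"
    unfolding \<sigma>' \<psi>_def using h by (auto simp: inv_f_f)
  ultimately show ?thesis
    unfolding proc_step_def Let_def if_not_P[OF False]
    using Gs by (intro bexI[of _ Gs] conjI exI[of _ \<psi>]) blast+
qed

lemma proc_run_rename:
  assumes "inj h"
  shows "proc_run E \<sigma> vs \<sigma>' \<Longrightarrow> proc_run E (h \<circ> \<sigma>) vs (h \<circ> \<sigma>')"
proof (induction rule: proc_run.induct)
  case (Cons \<sigma> v \<sigma>' vs \<sigma>'')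
  show ?case using proc_run.Cons[OF proc_step_rename[OF assms Cons.hyps(1)] Cons.IH] .
qed (rule proc_run.Nil)

definition down_closed :: "'a cotree set \<Rightarrow> bool" where
  "down_closed D \<longleftrightarrow> (\<forall>u\<in>D. \<forall>w\<in>subtrees u. is_inner w \<longrightarrow> w \<in> D)"

locale discriminating_cotree_of_graph =
  fixes E :: "'a \<Rightarrow> 'a \<Rightarrow> bool" and V :: "'a set" and T :: "'a cotree"
  assumes graph: "graph E V" and cotree: "is_discriminating_cotree E V T"
begin

lemma wf_T: "wf_tree T"
  using cotree unfolding is_discriminating_cotree_def is_cotree_def by blast

lemma leaves_T: "leaves T = V"
  using cotree unfolding is_discriminating_cotree_def is_cotree_def by blast

lemma finite_V: "finite V"
  using graph unfolding graph_def by blast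

lemma irreflexive: "\<not> E x x"
  using graph unfolding graph_def by blast

lemma wf_node: "u \<in> subtrees T \<Longrightarrow> wf_tree u"
  using wf_tree_subtree[OF wf_T] .

lemma child_node: "u \<in> subtrees T \<Longrightarrow> c \<in> set (children u) \<Longrightarrow> c \<in> subtrees T"
  using subtrees_trans children_in_subtrees by blast

lemma leaves_node_nonempty: "u \<in> subtrees T \<Longrightarrow> leaves u \<noteq> {}"
  using wf_tree_leaves_nonempty wf_node by blast

lemma children_disjoint:
  "u \<in> subtrees T \<Longrightarrow> c1 \<in> set (children u) \<Longrightarrow> c2 \<in> set (children u) \<Longrightarrow> c1 \<noteq> c2
    \<Longrightarrow> leaves c1 \<inter> leaves c2 = {}"
  using wf_tree_children_disjoint[OF wf_node] by blast

lemma leaves_child_subset: "c \<in> set (children u) \<Longrightarrow> leaves c \<subseteq> leaves u"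
  using leaves_subtree children_in_subtrees by blast

lemma edge_between_children:
  assumes "u \<in> subtrees T" "c1 \<in> set (children u)" "c2 \<in> set (children u)" "c1 \<noteq> c2"
    and "x \<in> leaves c1" "y \<in> leaves c2"
  shows "E x y = label u"
proof -
  obtain i j where "i < length (children u)" "j < length (children u)" "i \<noteq> j"
    "c1 = children u ! i" "c2 = children u ! j"
    using assms(2-4) by (metis in_set_conv_nth)
  then show ?thesis
    using cotree assms(1,5,6) is_inner_if_child[OF assms(2)]
    unfolding is_discriminating_cotree_def is_cotree_def by blast
qed

lemma label_inner_child:
  "u \<in> subtrees T \<Longrightarrow> c \<in> set (children u) \<Longrightarrow> is_inner c \<Longrightarrow> label c \<noteq> label u"
  using cotree is_inner_if_child unfolding is_discriminating_cotree_def discriminating_def by blast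

lemma inj_on_leaves_children:
  assumes "u \<in> subtrees T"
  shows "inj_on leaves (set (children u))"
proof (rule inj_onI, rule ccontr)
  fix c1 c2 assume c: "c1 \<in> set (children u)" "c2 \<in> set (children u)" "leaves c1 = leaves c2"
    and "c1 \<noteq> c2"
  then have "leaves c1 \<inter> leaves c2 = {}" using children_disjoint[OF assms] by blast
  then show False using c(3) leaves_node_nonempty[OF child_node[OF assms c(1)]] by simp
qed

lemma partition_children:
  assumes "u \<in> subtrees T" "is_inner u"
  shows "is_partition (leaves ` set (children u)) (leaves u)"
  unfolding is_partition_def
proof (intro conjI)
  show "\<forall>A\<in>leaves ` set (children u). A \<noteq> {}"
    using leaves_node_nonempty[OF child_node[OF assms(1)]] by blast
  show "\<Union> (leaves ` set (children u)) = leaves u"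
    using leaves_children[OF assms(2)] by simp
  show "\<forall>A\<in>leaves ` set (children u). \<forall>B\<in>leaves ` set (children u). A \<noteq> B \<longrightarrow> A \<inter> B = {}"
    using children_disjoint[OF assms(1)] by blast
qed

lemma card_partition_children:
  assumes "u \<in> subtrees T" "is_inner u"
  shows "2 \<le> card (leaves ` set (children u))"
  using wf_tree_card_children[OF wf_node[OF assms(1)] assms(2)]
  by (simp add: card_image inj_on_leaves_children[OF assms(1)])

lemma edges_between_children:
  assumes "u \<in> subtrees T"
  shows "\<forall>A\<in>leaves ` set (children u). \<forall>B\<in>leaves ` set (children u). A \<noteq> B \<longrightarrow>
    (\<forall>x\<in>A. \<forall>y\<in>B. E x y = label u)"
  using edge_between_children[OF assms] by blast

lemma all_edges_between_children:
  "u \<in> subtrees T \<Longrightarrow> label u \<Longrightarrow> all_edges_between E (leaves ` set (children u))"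
  using edges_between_children unfolding all_edges_between_def by blast

lemma no_edges_between_children:
  "u \<in> subtrees T \<Longrightarrow> \<not> label u \<Longrightarrow> no_edges_between E (leaves ` set (children u))"
  using edges_between_children unfolding no_edges_between_def by blast

lemma join_node_connected:
  assumes "c \<in> subtrees T" "is_inner c" "label c" "leaves c \<subseteq> W" "x \<in> leaves c" "y \<in> leaves c"
  shows "(x, y) \<in> {(a, b). a \<in> W \<and> b \<in> W \<and> E a b}\<^sup>*"
proof -
  let ?R = "{(a, b). a \<in> W \<and> b \<in> W \<and> E a b}"
  obtain d1 d2 where d: "d1 \<in> set (children c)" "x \<in> leaves d1"
    "d2 \<in> set (children c)" "y \<in> leaves d2"
    using assms(5,6) leaves_children[OF assms(2)] by blast
  have edge: "(a, b) \<in> ?R" if "d \<in> set (children c)" "d' \<in> set (children c)" "d \<noteq> d'"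
    "a \<in> leaves d" "b \<in> leaves d'" for a b d d'
    using edge_between_children[OF assms(1) that] assms(3,4) that leaves_child_subset by blast
  obtain d' where d': "d' \<in> set (children c)" "d' \<noteq> d1"
    using wf_tree_other_child[OF wf_node[OF assms(1)] d(1)] .
  obtain z where z: "z \<in> leaves d'"
    using leaves_node_nonempty[OF child_node[OF assms(1) d'(1)]] by blast
  show ?thesis
  proof (cases "d1 = d2")
    case True
    have "(x, z) \<in> ?R" using edge[OF d(1) d'(1) _ d(2) z] d'(2) by blast
    moreover have "(z, y) \<in> ?R" using edge[OF d'(1) d(3) _ z d(4)] d'(2) True by blast
    ultimately show ?thesis by (meson converse_rtrancl_into_rtrancl r_into_rtrancl)
  next
    case False
    then show ?thesis using edge[OF d(1) d(3) _ d(2) d(4)] by blast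
  qed
qed

text \<open>Each child of a union node is a single vertex or, the cotree being discriminating, a join
  node; either way it is connected, while distinct children are non-adjacent.\<close>

lemma component_union_node:
  assumes u: "u \<in> subtrees T" "is_inner u" "\<not> label u"
    and c: "c \<in> set (children u)" and x: "x \<in> leaves c"
  shows "component E (leaves u) x = leaves c"
proof -
  let ?W = "leaves u"
  let ?R = "{(a, b). a \<in> ?W \<and> b \<in> ?W \<and> E a b}"
  have cW: "leaves c \<subseteq> ?W" using leaves_child_subset[OF c] .
  have closed: "b \<in> leaves c" if "(a, b) \<in> ?R" "a \<in> leaves c" for a b
  proof (rule ccontr)
    assume b: "b \<notin> leaves c"
    have "b \<in> ?W" "E a b" using that(1) by simp_all
    then obtain c' where c': "c' \<in> set (children u)" "b \<in> leaves c'"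
      using leaves_children[OF u(2)] by auto
    then have "c \<noteq> c'" using b by blast
    then have "E a b = label u"
      using edge_between_children[OF u(1) c c'(1) _ that(2) c'(2)] by blast
    then show False using \<open>E a b\<close> u(3) by simp
  qed
  have "y \<in> leaves c" if "(x, y) \<in> ?R\<^sup>*" for y
    using that x by (induction rule: rtrancl_induct) (use closed in blast)+
  moreover have "(x, y) \<in> ?R\<^sup>*" if "y \<in> leaves c" for y
  proof (cases "is_inner c")
    case True
    then have "label c" using label_inner_child[OF u(1) c] u(3) by simp
    then show ?thesis using join_node_connected[OF child_node[OF u(1) c] True _ cW x that] by blast
  next
    case False
    then have "y = x" using x that by (auto simp: not_is_inner_iff)
    then show ?thesis by simp
  qed
  ultimately show ?thesis unfolding component_def using cW by blast
qed

lemma components_union_node: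
  assumes "u \<in> subtrees T" "is_inner u" "\<not> label u"
  shows "components E (leaves u) = leaves ` set (children u)"
proof -
  have "components E (leaves u) = (\<Union>c\<in>set (children u). component E (leaves u) ` leaves c)"
    unfolding components_def using leaves_children[OF assms(2)] by blast
  also have "\<dots> = (\<Union>c\<in>set (children u). {leaves c})"
    using component_union_node[OF assms] leaves_node_nonempty[OF child_node[OF assms(1)]]
    by (intro SUP_cong refl) blast
  finally show ?thesis by blast
qed

lemma proc_step_union_nodeE:
  assumes v: "v \<in> subtrees T" "is_inner v" "\<not> label v" and step: "proc_step E \<sigma> v \<sigma>'"
  obtains cs \<phi> where "cs \<in> set (children v)"
    "\<forall>c\<in>set (children v). chi E (leaves c) \<le> chi E (leaves cs)"
    "\<forall>x. x \<notin> leaves v - leaves cs \<longrightarrow> \<sigma>' x = \<sigma> x"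
    "\<forall>c\<in>set (children v). c \<noteq> cs \<longrightarrow> inj_on (\<phi> c) (\<sigma> ` leaves c) \<and>
       \<phi> c ` \<sigma> ` leaves c \<subseteq> \<sigma> ` leaves cs \<and> (\<forall>x\<in>leaves c. \<sigma>' x = \<phi> c (\<sigma> x))"
proof -
  let ?W = "leaves v"
  have G: "components E ?W = leaves ` set (children v)"
    using components_union_node[OF v(1-3)] .
  obtain Gs \<phi> where Gs: "Gs \<in> leaves ` set (children v)"
      "\<forall>C\<in>leaves ` set (children v). chi E C \<le> chi E Gs"
    and \<phi>: "\<forall>C\<in>leaves ` set (children v). C \<noteq> Gs \<longrightarrow>
      inj_on (\<phi> C) (\<sigma> ` C) \<and> \<phi> C ` (\<sigma> ` C) \<subseteq> \<sigma> ` Gs"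
    and \<sigma>': "\<sigma>' = (\<lambda>x. if x \<in> ?W - Gs then \<phi> (component E ?W x) (\<sigma> x) else \<sigma> x)"
    using step v(3) unfolding proc_step_def Let_def G by auto
  obtain cs where cs: "cs \<in> set (children v)" "Gs = leaves cs" using Gs(1) by blast
  show ?thesis
  proof (rule that[of cs "\<lambda>c. \<phi> (leaves c)"])
    show "cs \<in> set (children v)" by (rule cs(1))
    show "\<forall>c\<in>set (children v). chi E (leaves c) \<le> chi E (leaves cs)"
      using Gs(2) cs(2) by blast
    show "\<forall>x. x \<notin> ?W - leaves cs \<longrightarrow> \<sigma>' x = \<sigma> x"
      unfolding \<sigma>' cs(2) by simp
    show "\<forall>c\<in>set (children v). c \<noteq> cs \<longrightarrow> inj_on (\<phi> (leaves c)) (\<sigma> ` leaves c) \<and>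
       \<phi> (leaves c) ` \<sigma> ` leaves c \<subseteq> \<sigma> ` leaves cs \<and> (\<forall>x\<in>leaves c. \<sigma>' x = \<phi> (leaves c) (\<sigma> x))"
    proof (intro ballI impI)
      fix c assume c: "c \<in> set (children v)" "c \<noteq> cs"
      have "leaves c \<noteq> leaves cs"
        using inj_on_leaves_children[OF v(1)] c cs(1) by (auto dest: inj_onD)
      then have "inj_on (\<phi> (leaves c)) (\<sigma> ` leaves c) \<and> \<phi> (leaves c) ` \<sigma> ` leaves c \<subseteq> \<sigma> ` leaves cs"
        using \<phi> c(1) cs(2) by blast
      moreover have "leaves c \<inter> leaves cs = {}" using children_disjoint[OF v(1) c(1) cs(1) c(2)] .
      then have "\<forall>x\<in>leaves c. \<sigma>' x = \<phi> (leaves c) (\<sigma> x)"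
        using component_union_node[OF v c(1)] leaves_child_subset[OF c(1)] cs(2)
        unfolding \<sigma>' by auto
      ultimately show "inj_on (\<phi> (leaves c)) (\<sigma> ` leaves c) \<and>
        \<phi> (leaves c) ` \<sigma> ` leaves c \<subseteq> \<sigma> ` leaves cs \<and>
        (\<forall>x\<in>leaves c. \<sigma>' x = \<phi> (leaves c) (\<sigma> x))" by blast
    qed
  qed
qed

lemma proc_step_union_node_colors:
  assumes v: "v \<in> subtrees T" "is_inner v" "\<not> label v" and step: "proc_step E \<sigma> v \<sigma>'"
  obtains cs where "cs \<in> set (children v)" "\<forall>x. x \<notin> leaves v - leaves cs \<longrightarrow> \<sigma>' x = \<sigma> x"
    "\<forall>c\<in>set (children v). same_color_classes (leaves c) \<sigma> \<sigma>'"
    "\<sigma>' ` leaves v \<subseteq> \<sigma> ` leaves cs"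
proof -
  obtain cs \<phi> where cs: "cs \<in> set (children v)"
    and "\<forall>c\<in>set (children v). chi E (leaves c) \<le> chi E (leaves cs)"
    and unchanged: "\<forall>x. x \<notin> leaves v - leaves cs \<longrightarrow> \<sigma>' x = \<sigma> x"
    and other: "\<forall>c\<in>set (children v). c \<noteq> cs \<longrightarrow> inj_on (\<phi> c) (\<sigma> ` leaves c) \<and>
       \<phi> c ` \<sigma> ` leaves c \<subseteq> \<sigma> ` leaves cs \<and> (\<forall>x\<in>leaves c. \<sigma>' x = \<phi> c (\<sigma> x))"
    by (rule proc_step_union_nodeE[OF v step])
  show ?thesis
  proof (rule that[OF cs unchanged])
    show "\<forall>c\<in>set (children v). same_color_classes (leaves c) \<sigma> \<sigma>'"
    proof
      fix c assume c: "c \<in> set (children v)"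
      show "same_color_classes (leaves c) \<sigma> \<sigma>'"
      proof (cases "c = cs")
        case True
        then show ?thesis using unchanged by (simp add: same_color_classes_eq_on)
      next
        case False
        then show ?thesis using other c by (blast intro: same_color_classes_if_renaming)
      qed
    qed
    show "\<sigma>' ` leaves v \<subseteq> \<sigma> ` leaves cs"
    proof
      fix a assume "a \<in> \<sigma>' ` leaves v"
      then obtain x c where x: "x \<in> leaves c" "c \<in> set (children v)" "a = \<sigma>' x"
        using leaves_children[OF v(2)] by auto
      show "a \<in> \<sigma> ` leaves cs"
      proof (cases "c = cs")
        case True
        then show ?thesis using x unchanged by simp
      next
        case False
        then show ?thesis using other x by blast
      qed
    qed
  qed
qed

lemma proc_step_union_nodeI:
  assumes v: "v \<in> subtrees T" "is_inner v" "\<not> label v" and cs: "cs \<in> set (children v)"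
    and max: "\<forall>c\<in>set (children v). chi E (leaves c) \<le> chi E (leaves cs)"
    and \<phi>: "\<forall>c\<in>set (children v). c \<noteq> cs \<longrightarrow>
      inj_on (\<phi> (leaves c)) (\<sigma> ` leaves c) \<and> \<phi> (leaves c) ` \<sigma> ` leaves c \<subseteq> \<sigma> ` leaves cs"
  obtains \<sigma>' where "proc_step E \<sigma> v \<sigma>'" "\<forall>x\<in>leaves cs. \<sigma>' x = \<sigma> x"
    "\<forall>c\<in>set (children v). c \<noteq> cs \<longrightarrow> (\<forall>x\<in>leaves c. \<sigma>' x = \<phi> (leaves c) (\<sigma> x))"
proof -
  let ?\<sigma>' = "\<lambda>x. if x \<in> leaves v - leaves cs then \<phi> (component E (leaves v) x) (\<sigma> x) else \<sigma> x"
  have G: "components E (leaves v) = leaves ` set (children v)"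
    using components_union_node[OF v] .
  have "\<forall>C\<in>leaves ` set (children v). C \<noteq> leaves cs \<longrightarrow>
      inj_on (\<phi> C) (\<sigma> ` C) \<and> \<phi> C ` (\<sigma> ` C) \<subseteq> \<sigma> ` leaves cs"
  proof (intro ballI impI)
    fix C assume "C \<in> leaves ` set (children v)" "C \<noteq> leaves cs"
    then obtain c where "c \<in> set (children v)" "c \<noteq> cs" "C = leaves c" by blast
    then show "inj_on (\<phi> C) (\<sigma> ` C) \<and> \<phi> C ` (\<sigma> ` C) \<subseteq> \<sigma> ` leaves cs" using \<phi> by blast
  qed
  then have "proc_step E \<sigma> v ?\<sigma>'"
    unfolding proc_step_def Let_def G if_not_P[OF v(3)]
    using cs max by (intro bexI[of _ "leaves cs"] conjI exI[of _ \<phi>]) blast+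
  moreover have "\<forall>c\<in>set (children v). c \<noteq> cs \<longrightarrow> (\<forall>x\<in>leaves c. ?\<sigma>' x = \<phi> (leaves c) (\<sigma> x))"
  proof (intro ballI impI)
    fix c x assume c: "c \<in> set (children v)" "c \<noteq> cs" and x: "x \<in> leaves c"
    then have "x \<in> leaves v - leaves cs"
      using children_disjoint[OF v(1) c(1) cs] leaves_child_subset[OF c(1)] by blast
    then show "?\<sigma>' x = \<phi> (leaves c) (\<sigma> x)" using component_union_node[OF v c(1) x] by simp
  qed
  ultimately show ?thesis using that by simp
qed

lemma proc_step_facts:
  assumes v: "v \<in> subtrees T" "is_inner v" and step: "proc_step E \<sigma> v \<sigma>'"
  shows "\<forall>x. x \<notin> leaves v \<longrightarrow> \<sigma>' x = \<sigma> x" "\<sigma>' ` leaves v \<subseteq> \<sigma> ` leaves v"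
    and "\<forall>c\<in>set (children v). same_color_classes (leaves c) \<sigma> \<sigma>'"
proof -
  have "(\<forall>x. x \<notin> leaves v \<longrightarrow> \<sigma>' x = \<sigma> x) \<and> \<sigma>' ` leaves v \<subseteq> \<sigma> ` leaves v
    \<and> (\<forall>c\<in>set (children v). same_color_classes (leaves c) \<sigma> \<sigma>')"
  proof (cases "label v")
    case True
    then show ?thesis using step by (simp add: proc_step_join same_color_classes_eq_on)
  next
    case False
    then obtain cs where "cs \<in> set (children v)"
      "\<forall>x. x \<notin> leaves v - leaves cs \<longrightarrow> \<sigma>' x = \<sigma> x"
      "\<forall>c\<in>set (children v). same_color_classes (leaves c) \<sigma> \<sigma>'"
      "\<sigma>' ` leaves v \<subseteq> \<sigma> ` leaves cs"
      using proc_step_union_node_colors[OF v False step] by metis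
    then show ?thesis using leaves_child_subset[of cs v] by blast
  qed
  then show "\<forall>x. x \<notin> leaves v \<longrightarrow> \<sigma>' x = \<sigma> x" "\<sigma>' ` leaves v \<subseteq> \<sigma> ` leaves v"
    "\<forall>c\<in>set (children v). same_color_classes (leaves c) \<sigma> \<sigma>'" by blast+
qed

lemma proc_step_same_classes:
  assumes v: "v \<in> subtrees T" "is_inner v" and step: "proc_step E \<sigma> v \<sigma>'"
    and u: "u \<in> subtrees T" "v \<notin> subtrees u"
  shows "same_color_classes (leaves u) \<sigma> \<sigma>'"
proof -
  have "u \<in> subtrees v \<or> leaves u \<inter> leaves v = {}"
    using wf_tree_laminar[OF wf_T u(1) v(1)] u(2) by blast
  then show ?thesis
  proof
    assume "u \<in> subtrees v"
    moreover have "u \<noteq> v" using u(2) by auto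
    ultimately obtain c where c: "c \<in> set (children v)" "u \<in> subtrees c"
      using proper_subtree_in_child by blast
    then have "same_color_classes (leaves c) \<sigma> \<sigma>'" using proc_step_facts(3)[OF v step] by blast
    then show ?thesis using same_color_classes_subset leaves_subtree[OF c(2)] by blast
  next
    assume "leaves u \<inter> leaves v = {}"
    then show ?thesis
      using proc_step_facts(1)[OF v step] by (blast intro: same_color_classes_eq_on)
  qed
qed

definition ready :: "'a cotree set \<Rightarrow> 'a cotree \<Rightarrow> bool" where
  "ready D v \<longleftrightarrow> v \<in> subtrees T \<and> is_inner v \<and> v \<notin> D \<and>
     (\<forall>w\<in>subtrees v. is_inner w \<longrightarrow> w \<noteq> v \<longrightarrow> w \<in> D)"

fun ready_list :: "'a cotree set \<Rightarrow> 'a cotree list \<Rightarrow> bool" where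
  "ready_list D [] \<longleftrightarrow> True"
| "ready_list D (v # vs) \<longleftrightarrow> ready D v \<and> ready_list (insert v D) vs"

definition settled :: "'a cotree set \<Rightarrow> 'a cotree \<Rightarrow> bool" where
  "settled D u \<longleftrightarrow> u \<in> subtrees T \<and> (u \<in> D \<or> \<not> is_inner u)"

lemma ready_list_if_nth_ready:
  "\<forall>i<length vs. ready (D \<union> set (take i vs)) (vs ! i) \<Longrightarrow> ready_list D vs"
proof (induction vs arbitrary: D)
  case (Cons v vs)
  have "ready D v" using Cons.prems[rule_format, of 0] by simp
  moreover have "\<forall>i<length vs. ready (insert v D \<union> set (take i vs)) (vs ! i)"
    using Cons.prems[rule_format, of "Suc _"] by simp
  ultimately show ?case using Cons.IH by simp
qed simp

lemma ready_list_bottom_up_order: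
  assumes "bottom_up_order T vs"
  shows "ready_list {} vs"
proof (rule ready_list_if_nth_ready, intro allI impI)
  have distinct: "distinct vs" and set_vs: "set vs = {u \<in> subtrees T. is_inner u}"
    and order: "\<forall>i<length vs. \<forall>j<length vs. vs ! i \<in> subtrees (vs ! j) \<and> vs ! i \<noteq> vs ! j \<longrightarrow> i < j"
    using assms unfolding bottom_up_order_def by blast+
  fix i assume i: "i < length vs"
  have "vs ! i \<in> subtrees T" "is_inner (vs ! i)" using set_vs i nth_mem by blast+
  moreover have "vs ! i \<notin> set (take i vs)"
    using distinct i by (simp add: in_set_conv_nth nth_eq_iff_index_eq)
  moreover have "w \<in> set (take i vs)"
    if w: "w \<in> subtrees (vs ! i)" "is_inner w" "w \<noteq> vs ! i" for w
  proof -
    have "w \<in> set vs" using set_vs w(1,2) subtrees_trans \<open>vs ! i \<in> subtrees T\<close> by blast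
    then obtain j where j: "j < length vs" "vs ! j = w" by (metis in_set_conv_nth)
    then have "j < i" using order i w(1,3) by blast
    then show ?thesis using j i by (auto simp: in_set_conv_nth)
  qed
  ultimately show "ready ({} \<union> set (take i vs)) (vs ! i)" unfolding ready_def by auto
qed

lemma proc_run_preserves:
  assumes "proc_run E \<sigma> vs \<sigma>'" "ready_list D vs" "Q D \<sigma>"
    and step: "\<And>D \<sigma> v \<sigma>'. Q D \<sigma> \<Longrightarrow> ready D v \<Longrightarrow> proc_step E \<sigma> v \<sigma>' \<Longrightarrow> Q (insert v D) \<sigma>'"
  shows "Q (D \<union> set vs) \<sigma>'"
  using assms(1-3)
proof (induction arbitrary: D rule: proc_run.induct)
  case (Cons \<sigma> v \<sigma>' vs \<sigma>'')
  then have "Q (insert v D) \<sigma>'" using step by simp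
  moreover have "ready_list (insert v D) vs" using Cons.prems(1) by simp
  ultimately have "Q (insert v D \<union> set vs) \<sigma>''" by (rule Cons.IH[rotated])
  moreover have "insert v D \<union> set vs = D \<union> set (v # vs)" by simp
  ultimately show ?case by simp
qed simp

lemma proc_run_exists:
  assumes "ready_list D vs" "Q D \<sigma>"
    and step: "\<And>D \<sigma> v. Q D \<sigma> \<Longrightarrow> ready D v \<Longrightarrow> \<exists>\<sigma>'. proc_step E \<sigma> v \<sigma>' \<and> Q (insert v D) \<sigma>'"
  shows "\<exists>\<sigma>'. proc_run E \<sigma> vs \<sigma>' \<and> Q (D \<union> set vs) \<sigma>'"
  using assms(1,2)
proof (induction vs arbitrary: D \<sigma>)
  case Nil
  then show ?case using proc_run.Nil by fastforce
next
  case (Cons v vs)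
  then have "Q D \<sigma>" "ready D v" "ready_list (insert v D) vs" by simp_all
  then obtain \<sigma>' where \<sigma>': "proc_step E \<sigma> v \<sigma>'" "Q (insert v D) \<sigma>'" using step by blast
  then obtain \<sigma>'' where "proc_run E \<sigma>' vs \<sigma>''" "Q (insert v D \<union> set vs) \<sigma>''"
    using Cons.IH \<open>ready_list (insert v D) vs\<close> by blast
  then show ?case using proc_run.Cons[OF \<sigma>'(1)] by auto
qed

lemma parent_in_subtree:
  assumes v: "v \<in> subtrees T" and c: "c \<in> set (children v)"
    and p: "p \<in> subtrees T" "c \<in> subtrees p" "c \<noteq> p"
  shows "v \<in> subtrees p"
proof -
  have "leaves c \<noteq> {}" using leaves_node_nonempty[OF child_node[OF v c]] .
  moreover have "leaves c \<subseteq> leaves v" "leaves c \<subseteq> leaves p"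
    using leaves_child_subset[OF c] leaves_subtree[OF p(2)] by blast+
  ultimately have "p \<in> subtrees v \<or> v \<in> subtrees p"
    using wf_tree_laminar[OF wf_T p(1) v] by blast
  moreover have "p \<notin> subtrees v \<or> p = v"
  proof (rule ccontr)
    assume "\<not> ?thesis"
    then obtain c' where c': "c' \<in> set (children v)" "p \<in> subtrees c'"
      using proper_subtree_in_child by blast
    have "c \<in> subtrees c'" using subtrees_trans[OF c'(2) p(2)] .
    show False
    proof (cases "c' = c")
      case True
      then show False using subtrees_antisym[OF p(2)] c'(2) p(3) by blast
    next
      case False
      then have "leaves c' \<inter> leaves c = {}" using children_disjoint[OF v c'(1) c] by blast
      then show False
        using leaves_subtree[OF \<open>c \<in> subtrees c'\<close>] \<open>leaves c \<noteq> {}\<close> by blast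
    qed
  qed
  ultimately show ?thesis by auto
qed

text \<open>While the procedure runs, a node none of whose proper ancestors has been processed still
  carries only initial colours of its own leaves. Hence the children of the next node to be
  processed have disjoint palettes when the initial colouring is injective.\<close>

definition run_invariant :: "('a \<Rightarrow> 'c) \<Rightarrow> 'a cotree set \<Rightarrow> ('a \<Rightarrow> 'c) \<Rightarrow> bool" where
  "run_invariant \<sigma>0 D \<sigma> \<longleftrightarrow> down_closed D \<and>
     (\<forall>u\<in>subtrees T. (\<forall>p\<in>subtrees T. u \<in> subtrees p \<longrightarrow> u \<noteq> p \<longrightarrow> p \<notin> D) \<longrightarrow>
        \<sigma> ` leaves u \<subseteq> \<sigma>0 ` leaves u)"

lemma run_invariant_init: "run_invariant \<sigma>0 {} \<sigma>0"
  unfolding run_invariant_def down_closed_def by blast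

lemma run_invariant_step:
  assumes inv: "run_invariant \<sigma>0 D \<sigma>" and ready: "ready D v" and step: "proc_step E \<sigma> v \<sigma>'"
  shows "run_invariant \<sigma>0 (insert v D) \<sigma>'"
proof -
  have v: "v \<in> subtrees T" "is_inner v"
    and below: "\<forall>w\<in>subtrees v. is_inner w \<longrightarrow> w \<noteq> v \<longrightarrow> w \<in> D"
    using ready unfolding ready_def by blast+
  have "down_closed (insert v D)"
    using inv below unfolding run_invariant_def down_closed_def by blast
  moreover have "\<sigma>' ` leaves u \<subseteq> \<sigma>0 ` leaves u"
    if u: "u \<in> subtrees T" and top: "\<forall>p\<in>subtrees T. u \<in> subtrees p \<longrightarrow> u \<noteq> p \<longrightarrow> p \<notin> insert v D"
    for u
  proof -
    have "\<sigma> ` leaves u \<subseteq> \<sigma>0 ` leaves u" using inv u top unfolding run_invariant_def by blast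
    moreover have "\<sigma>' ` leaves u \<subseteq> \<sigma> ` leaves u"
    proof -
      have "v \<in> subtrees u \<or> leaves u \<inter> leaves v = {}"
        using wf_tree_laminar[OF wf_T u v(1)] top v(1) by blast
      then show ?thesis
        using proc_step_facts(1,2)[OF v step] leaves_subtree[of v u] by blast
    qed
    ultimately show ?thesis by blast
  qed
  ultimately show ?thesis unfolding run_invariant_def by blast
qed

lemma ready_child_settled: "ready D v \<Longrightarrow> c \<in> set (children v) \<Longrightarrow> settled D c"
  unfolding ready_def settled_def
  using child_node children_in_subtrees size_child_less by (metis less_irrefl)

lemma settled_insert: "settled (insert v D) u \<longleftrightarrow> settled D u \<or> (u = v \<and> v \<in> subtrees T)"
  unfolding settled_def by auto

lemma ready_step_same_classes:
  assumes inv: "run_invariant \<sigma>0 D \<sigma>" and ready: "ready D v" and step: "proc_step E \<sigma> v \<sigma>'"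
    and u: "settled D u"
  shows "same_color_classes (leaves u) \<sigma> \<sigma>'"
proof -
  have v: "v \<in> subtrees T" "is_inner v" "v \<notin> D" using ready unfolding ready_def by blast+
  have "v \<notin> subtrees u"
  proof
    assume "v \<in> subtrees u"
    then show False
      using u v inv unfolding settled_def run_invariant_def down_closed_def
      by (auto simp: not_is_inner_iff)
  qed
  then show ?thesis using proc_step_same_classes[OF v(1,2) step] u unfolding settled_def by blast
qed

lemma ready_children_colors_disjoint:
  assumes inj: "inj_on \<sigma>0 V" and inv: "run_invariant \<sigma>0 D \<sigma>" and ready: "ready D v"
    and c: "c1 \<in> set (children v)" "c2 \<in> set (children v)" "c1 \<noteq> c2"
  shows "\<sigma> ` leaves c1 \<inter> \<sigma> ` leaves c2 = {}"
proof -
  have v: "v \<in> subtrees T" "v \<notin> D" using ready unfolding ready_def by blast+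
  have palette: "\<sigma> ` leaves c \<subseteq> \<sigma>0 ` leaves c" if "c \<in> set (children v)" for c
  proof -
    have "p \<notin> D" if "p \<in> subtrees T" "c \<in> subtrees p" "c \<noteq> p" for p
      using parent_in_subtree[OF v(1) \<open>c \<in> set (children v)\<close> that] inv v(2)
      unfolding run_invariant_def down_closed_def using ready unfolding ready_def by blast
    then show ?thesis using inv child_node[OF v(1) that] unfolding run_invariant_def by blast
  qed
  have "leaves c1 \<subseteq> V" "leaves c2 \<subseteq> V"
    using leaves_subtree child_node[OF v(1)] c(1,2) leaves_T by blast+
  then have "\<sigma>0 ` leaves c1 \<inter> \<sigma>0 ` leaves c2 = \<sigma>0 ` (leaves c1 \<inter> leaves c2)"
    using inj_on_image_Int[OF inj] by blast
  also have "\<dots> = {}" using children_disjoint[OF v(1) c] by simp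
  finally show ?thesis using palette[OF c(1)] palette[OF c(2)] by blast
qed

end

section \<open>Outputs are recursively minimal\<close>

context discriminating_cotree_of_graph
begin

lemma optimal_at_ready_node:
  assumes inj: "inj_on \<sigma>0 V" and inv: "run_invariant \<sigma>0 D \<sigma>" and ready: "ready D v"
    and step: "proc_step E \<sigma> v \<sigma>'"
    and opt: "\<forall>u. settled D u \<longrightarrow> optimal_coloring E (leaves u) \<sigma>"
  shows "optimal_coloring E (leaves v) \<sigma>'"
proof -
  have v: "v \<in> subtrees T" "is_inner v" using ready unfolding ready_def by blast+
  let ?P = "leaves ` set (children v)"
  have part: "is_partition ?P (leaves v)" using partition_children[OF v] .
  have irr: "\<forall>x\<in>leaves v. \<not> E x x" using irreflexive by blast
  have children_opt: "\<forall>A\<in>?P. optimal_coloring E A \<sigma>"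
    using opt ready_child_settled[OF ready] by blast
  show ?thesis
  proof (cases "label v")
    case True
    have "\<forall>A\<in>?P. \<forall>B\<in>?P. A \<noteq> B \<longrightarrow> \<sigma> ` A \<inter> \<sigma> ` B = {}"
      using ready_children_colors_disjoint[OF inj inv ready] by blast
    then have "optimal_coloring E (leaves v) \<sigma>"
      using optimal_coloring_join[OF finite_leaves irr part
          all_edges_between_children[OF v(1) True]] children_opt by blast
    then show ?thesis using step True by (simp add: proc_step_join)
  next
    case False
    obtain cs where cs: "cs \<in> set (children v)"
      and unchanged: "\<forall>x. x \<notin> leaves v - leaves cs \<longrightarrow> \<sigma>' x = \<sigma> x"
      and classes: "\<forall>c\<in>set (children v). same_color_classes (leaves c) \<sigma> \<sigma>'"
      and colors: "\<sigma>' ` leaves v \<subseteq> \<sigma> ` leaves cs"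
      by (rule proc_step_union_node_colors[OF v False step])
    have "\<forall>A\<in>?P. optimal_coloring E A \<sigma>'"
      using children_opt classes optimal_coloring_same_classes by blast
    moreover have "\<sigma>' ` leaves v \<subseteq> \<sigma>' ` leaves cs" using colors unchanged by auto
    ultimately show ?thesis
      using optimal_coloring_union[OF finite_leaves irr part
          no_edges_between_children[OF v(1) False]] cs unfolding optimal_coloring_def by blast
  qed
qed

lemma optimal_invariant_step:
  assumes inj: "inj_on \<sigma>0 V" and inv: "run_invariant \<sigma>0 D \<sigma>" and ready: "ready D v"
    and step: "proc_step E \<sigma> v \<sigma>'"
    and opt: "\<forall>u. settled D u \<longrightarrow> optimal_coloring E (leaves u) \<sigma>"
  shows "\<forall>u. settled (insert v D) u \<longrightarrow> optimal_coloring E (leaves u) \<sigma>'"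
proof (intro allI impI)
  fix u assume "settled (insert v D) u"
  then consider "u = v" | "settled D u" unfolding settled_insert by blast
  then show "optimal_coloring E (leaves u) \<sigma>'"
  proof cases
    case 1
    then show ?thesis using optimal_at_ready_node[OF assms] by simp
  next
    case 2
    then show ?thesis
      using opt ready_step_same_classes[OF inv ready step] optimal_coloring_same_classes by blast
  qed
qed

lemma color_minimal_if_optimal_on_nodes:
  assumes opt: "\<forall>w\<in>subtrees T. optimal_coloring E (leaves w) \<sigma>"
  shows "u \<in> subtrees T \<Longrightarrow> color_minimal E \<sigma> (leaves u)"
proof (induction u)
  case (Leaf x)
  then show ?case by (simp add: color_minimal.K1)
next
  case (Inner b ts)
  let ?u = "Inner b ts" and ?P = "leaves ` set ts"
  have u: "?u \<in> subtrees T" "is_inner ?u" using Inner.prems by simp_all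
  have parts: "\<forall>A\<in>?P. color_minimal E \<sigma> A"
    using Inner.IH child_node[OF u(1)] by auto
  have part: "is_partition ?P (leaves ?u)" and card: "2 \<le> card ?P"
    using partition_children[OF u] card_partition_children[OF u] by simp_all
  have opt_u: "proper_coloring E (leaves ?u) \<sigma>" "card (\<sigma> ` leaves ?u) = chi E (leaves ?u)"
    using opt u(1) unfolding optimal_coloring_def by blast+
  show ?case
  proof (cases b)
    case True
    then have "all_edges_between E ?P" using all_edges_between_children[OF u(1)] by simp
    then show ?thesis using color_minimal.join[OF opt_u part card _ parts] by blast
  next
    case False
    then have "no_edges_between E ?P" using no_edges_between_children[OF u(1)] by simp
    then show ?thesis using color_minimal.union[OF opt_u part card _ parts] by blast
  qed
qed

theorem procedure_output_recursively_minimal: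
  assumes "procedure_output E V T \<sigma>"
  shows "recursively_minimal E V \<sigma>"
proof -
  obtain \<sigma>0 vs where inj: "inj_on \<sigma>0 V" and order: "bottom_up_order T vs"
    and run: "proc_run E \<sigma>0 vs \<sigma>"
    using assms unfolding procedure_output_def by blast
  let ?Q = "\<lambda>D \<sigma>. run_invariant \<sigma>0 D \<sigma> \<and> (\<forall>u. settled D u \<longrightarrow> optimal_coloring E (leaves u) \<sigma>)"
  have "?Q {} \<sigma>0"
    using run_invariant_init unfolding settled_def
    by (auto simp: not_is_inner_iff irreflexive optimal_coloring_singleton)
  then have "?Q ({} \<union> set vs) \<sigma>"
  proof (rule proc_run_preserves[where Q = ?Q, OF run ready_list_bottom_up_order[OF order]])
    fix D \<sigma> v \<sigma>' assume "?Q D \<sigma>" "ready D v" "proc_step E \<sigma> v \<sigma>'"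
    then show "?Q (insert v D) \<sigma>'"
      using run_invariant_step optimal_invariant_step[OF inj] by blast
  qed
  moreover have "settled (set vs) u" if "u \<in> subtrees T" for u
    using order that unfolding bottom_up_order_def settled_def by blast
  ultimately have "\<forall>u\<in>subtrees T. optimal_coloring E (leaves u) \<sigma>" by simp
  then show ?thesis using color_minimal_if_optimal_on_nodes[of \<sigma> T] leaves_T by simp
qed

end

section \<open>Recursively minimal colourings are outputs\<close>

lemma inj_on_avoiding:
  assumes "infinite (UNIV :: 'c set)" "finite A" "finite (B :: 'c set)"
  obtains g :: "'a \<Rightarrow> 'c" where "inj_on g A" "g ` A \<inter> B = {}"
proof -
  obtain C where C: "finite C" "card C = card A" "B \<inter> C = {}"
    using finite_arbitrarily_large_disj[OF assms(1,3)] by blast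
  then obtain g where "bij_betw g A C" using finite_same_card_bij[OF assms(2)] by metis
  then show ?thesis using that C(3) unfolding bij_betw_def by blast
qed

lemma inj_undoing_on:
  assumes "inj_on f A" "f ` A \<inter> A = {}"
  obtains h where "inj h" "\<forall>a\<in>A. h (f a) = a"
proof
  define h where "h y = (if y \<in> f ` A then inv_into A f y else if y \<in> A then f y else y)" for y
  have "h (h y) = y" for y
    using assms unfolding h_def by (auto simp: inv_into_into f_inv_into_f)
  then show "inj h" by (metis injI)
  show "\<forall>a\<in>A. h (f a) = a" using assms(1) unfolding h_def by simp
qed

context discriminating_cotree_of_graph
begin

lemma diameter_le_2_children:
  assumes w: "w \<in> subtrees T" and S: "S \<subseteq> set (children w)" "\<forall>c\<in>S. \<exists>c'\<in>S. c' \<noteq> c"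
  shows "diameter_le_2 (\<lambda>x y. E x y = label w) (\<Union>c\<in>S. leaves c)"
  unfolding diameter_le_2_def
proof (intro ballI)
  fix x y assume "x \<in> (\<Union>c\<in>S. leaves c)" "y \<in> (\<Union>c\<in>S. leaves c)"
  then obtain c1 c2 where c: "c1 \<in> S" "x \<in> leaves c1" "c2 \<in> S" "y \<in> leaves c2" by blast
  have edge: "E a b = label w" if "d \<in> S" "d' \<in> S" "d \<noteq> d'" "a \<in> leaves d" "b \<in> leaves d'"
    for a b d d'
    using edge_between_children[OF w _ _ that(3-5)] S(1) that(1,2) by blast
  show "x = y \<or> E x y = label w \<or> (\<exists>z\<in>(\<Union>c\<in>S. leaves c). E x z = label w \<and> E z y = label w)"
  proof (cases "c1 = c2")
    case True
    obtain c' where c': "c' \<in> S" "c' \<noteq> c1" using S(2) c(1) by blast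
    obtain z where z: "z \<in> leaves c'"
      using leaves_node_nonempty[OF child_node[OF w]] S(1) c'(1) by blast
    have "E x z = label w" using edge[OF c(1) c'(1) _ c(2) z] c'(2) by blast
    moreover have "E z y = label w" using edge[OF c'(1) c(3) _ z c(4)] c'(2) True by blast
    ultimately show ?thesis using z c'(1) by blast
  next
    case False
    then show ?thesis using edge[OF c(1) c(3) _ c(2) c(4)] by blast
  qed
qed

lemma diameter_le_2_node:
  assumes c: "c \<in> subtrees T" and l: "is_inner c \<longrightarrow> label c = l"
  shows "diameter_le_2 (\<lambda>x y. E x y = l) (leaves c)"
proof (cases "is_inner c")
  case True
  have "\<forall>d\<in>set (children c). \<exists>d'\<in>set (children c). d' \<noteq> d"
  proof
    fix d assume "d \<in> set (children c)"
    then obtain d' where "d' \<in> set (children c)" "d' \<noteq> d"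
      using wf_tree_other_child[OF wf_node[OF c]] by blast
    then show "\<exists>d'\<in>set (children c). d' \<noteq> d" by blast
  qed
  then show ?thesis
    using diameter_le_2_children[OF c order_refl] leaves_children[OF True] l True by simp
next
  case False
  then show ?thesis by (auto simp: not_is_inner_iff diameter_le_2_def)
qed

text \<open>A colour-minimal decomposition of V need not be discriminating, so its parts are in general
  unions of the leaf sets of several siblings of the discriminating cotree, not single nodes.\<close>

definition optimal_below_siblings :: "('a \<Rightarrow> 'c) \<Rightarrow> 'a set \<Rightarrow> bool" where
  "optimal_below_siblings \<sigma> W \<longleftrightarrow> (\<forall>w S. w \<in> subtrees T \<longrightarrow> S \<subseteq> set (children w) \<longrightarrow>
     S \<noteq> {} \<longrightarrow> W = (\<Union>c\<in>S. leaves c) \<longrightarrow>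
     (\<forall>c\<in>S. \<forall>u\<in>subtrees c. optimal_coloring E (leaves u) \<sigma>))"

lemma optimal_below_same_label:
  assumes P: "is_partition P W" and cross: "\<forall>A\<in>P. \<forall>B\<in>P. A \<noteq> B \<longrightarrow> (\<forall>x\<in>A. \<forall>y\<in>B. E x y = b)"
    and IH: "\<forall>A\<in>P. optimal_below_siblings \<sigma> A"
    and w: "w \<in> subtrees T" "label w = b" and S: "S \<subseteq> set (children w)"
    and W: "W = (\<Union>c\<in>S. leaves c)"
  shows "\<forall>c\<in>S. \<forall>u\<in>subtrees c. optimal_coloring E (leaves u) \<sigma>"
proof (intro ballI)
  fix c u assume c: "c \<in> S" and u: "u \<in> subtrees c"
  have cross': "\<forall>A\<in>P. \<forall>B\<in>P. A \<noteq> B \<longrightarrow> (\<forall>x\<in>A. \<forall>y\<in>B. \<not> E x y = (\<not> b))"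
    using cross by simp
  have within: "\<exists>A\<in>P. leaves d \<subseteq> A" if d: "d \<in> S" for d
  proof -
    have dT: "d \<in> subtrees T" using child_node[OF w(1)] S d by blast
    have "is_inner d \<longrightarrow> label d = (\<not> b)" using label_inner_child[OF w(1)] S d w(2) by blast
    then have "diameter_le_2 (\<lambda>x y. E x y = (\<not> b)) (leaves d)" by (rule diameter_le_2_node[OF dT])
    moreover have "leaves d \<subseteq> W" using W d by blast
    ultimately obtain A where "A \<in> P" "leaves d \<subseteq> A"
      using diameter_le_2_within_part[OF P cross' _ leaves_node_nonempty[OF dT]] by blast
    then show ?thesis by blast
  qed
  obtain A where A: "A \<in> P" "leaves c \<subseteq> A" using within[OF c] by blast
  define S' where "S' = {d \<in> S. leaves d \<subseteq> A}"
  have "A = (\<Union>d\<in>S'. leaves d)"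
  proof
    show "A \<subseteq> (\<Union>d\<in>S'. leaves d)"
    proof
      fix y assume "y \<in> A"
      then have "y \<in> W" using P A(1) unfolding is_partition_def by blast
      then obtain d where d: "d \<in> S" "y \<in> leaves d" using W by blast
      obtain A' where A': "A' \<in> P" "leaves d \<subseteq> A'" using within[OF d(1)] by blast
      then have "A' = A" using partition_part_unique[OF P A'(1) A(1)] d(2) \<open>y \<in> A\<close> by blast
      then show "y \<in> (\<Union>d\<in>S'. leaves d)" using d A'(2) unfolding S'_def by blast
    qed
  qed (auto simp: S'_def)
  moreover have "S' \<subseteq> set (children w)" "S' \<noteq> {}" "c \<in> S'"
    using S c A(2) unfolding S'_def by blast+
  ultimately show "optimal_coloring E (leaves u) \<sigma>"
    using IH A(1) w(1) u unfolding optimal_below_siblings_def by blast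
qed

lemma optimal_below_siblings_decomposition:
  assumes P: "is_partition P W" "2 \<le> card P"
    and cross: "\<forall>A\<in>P. \<forall>B\<in>P. A \<noteq> B \<longrightarrow> (\<forall>x\<in>A. \<forall>y\<in>B. E x y = b)"
    and IH: "\<forall>A\<in>P. optimal_below_siblings \<sigma> A" and opt: "optimal_coloring E W \<sigma>"
  shows "optimal_below_siblings \<sigma> W"
  unfolding optimal_below_siblings_def
proof (intro allI impI)
  fix w S assume w: "w \<in> subtrees T" and S: "S \<subseteq> set (children w)" "S \<noteq> {}"
    and W: "W = (\<Union>c\<in>S. leaves c)"
  have not_diameter_le_2: "\<not> diameter_le_2 (\<lambda>x y. E x y = (\<not> b)) W"
    by (rule partition_not_diameter_le_2[OF P]) (use cross in simp)
  show "\<forall>c\<in>S. \<forall>u\<in>subtrees c. optimal_coloring E (leaves u) \<sigma>"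
  proof (cases "label w = b")
    case True
    show ?thesis using optimal_below_same_label[OF P(1) cross IH w True S(1) W] .
  next
    case False
    obtain c where c: "c \<in> S" using S(2) by blast
    have S_c: "S = {c}"
    proof (rule ccontr)
      assume "S \<noteq> {c}"
      then obtain c' where "c' \<in> S" "c' \<noteq> c" using c by blast
      then have "\<forall>d\<in>S. \<exists>d'\<in>S. d' \<noteq> d" using c by metis
      then show False
        using diameter_le_2_children[OF w S(1)] W False not_diameter_le_2 by simp
    qed
    have cT: "c \<in> subtrees T" using child_node[OF w] S(1) c by blast
    have inner: "is_inner c" and label_c: "label c = b"
    proof (atomize (full), rule ccontr)
      assume "\<not> (is_inner c \<and> label c = b)"
      then have "is_inner c \<longrightarrow> label c = (\<not> b)" by blast
      then show False
        using diameter_le_2_node[OF cT] not_diameter_le_2 W S_c by simp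
    qed
    have "\<forall>d\<in>set (children c). \<forall>u\<in>subtrees d. optimal_coloring E (leaves u) \<sigma>"
      using optimal_below_same_label[OF P(1) cross IH cT label_c order_refl]
        W S_c leaves_children[OF inner] by simp
    then show ?thesis using opt W S_c subtrees_children[OF inner] by auto
  qed
qed

lemma color_minimal_optimal_below_siblings:
  "color_minimal E \<sigma> W \<Longrightarrow> optimal_below_siblings \<sigma> W"
proof (induction rule: color_minimal.induct)
  case (K1 x)
  show ?case unfolding optimal_below_siblings_def
  proof (intro allI impI ballI)
    fix w S c u assume w: "w \<in> subtrees T" and S: "S \<subseteq> set (children w)"
      and W: "{x} = (\<Union>c\<in>S. leaves c)" and c: "c \<in> S" and u: "u \<in> subtrees c"
    have "c = Leaf x"
      using wf_tree_leaves_singleton[OF wf_node[OF child_node[OF w]]] S c W by blast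
    then show "optimal_coloring E (leaves u) \<sigma>"
      using u by (simp add: optimal_coloring_singleton irreflexive)
  qed
next
  case (union W P)
  then show ?case
    using optimal_below_siblings_decomposition[of P W False \<sigma>]
    unfolding no_edges_between_def optimal_coloring_def by auto
next
  case (join W P)
  then show ?case
    using optimal_below_siblings_decomposition[of P W True \<sigma>]
    unfolding all_edges_between_def optimal_coloring_def by auto
qed

lemma color_minimal_optimal_on_nodes:
  assumes "color_minimal E \<sigma> V"
  shows "\<forall>u\<in>subtrees T. optimal_coloring E (leaves u) \<sigma>"
proof -
  have opt_V: "optimal_coloring E (leaves T) \<sigma>"
    using color_minimal_optimal_coloring[OF assms] irreflexive leaves_T by auto
  show ?thesis
  proof (cases "is_inner T")
    case True
    have "set (children T) \<noteq> {}" using wf_tree_length_children[OF wf_T True] by auto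
    moreover have "V = (\<Union>c\<in>set (children T). leaves c)"
      using leaves_children[OF True] leaves_T by simp
    ultimately have "\<forall>c\<in>set (children T). \<forall>u\<in>subtrees c. optimal_coloring E (leaves u) \<sigma>"
      using color_minimal_optimal_below_siblings[OF assms, unfolded optimal_below_siblings_def,
          rule_format, OF subtrees_refl order_refl] by blast
    then show ?thesis using opt_V subtrees_children[OF True] by auto
  next
    case False
    then show ?thesis using opt_V by (auto simp: not_is_inner_iff)
  qed
qed

lemma exists_max_chi_child:
  assumes "u \<in> subtrees T" "is_inner u"
  obtains cs where "cs \<in> set (children u)"
    "\<forall>c\<in>set (children u). chi E (leaves c) \<le> chi E (leaves cs)"
proof -
  let ?chis = "(\<lambda>c. chi E (leaves c)) ` set (children u)"
  have "set (children u) \<noteq> {}"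
    using wf_tree_length_children[OF wf_node[OF assms(1)] assms(2)] by auto
  then have "Max ?chis \<in> ?chis" by (intro Max_in) simp_all
  then obtain cs where "Max ?chis = chi E (leaves cs)" and cs: "cs \<in> set (children u)"
    by (rule imageE)
  then have "\<forall>c\<in>set (children u). chi E (leaves c) \<le> chi E (leaves cs)"
    by (metis Max_ge finite_imageI finite_set imageI)
  with cs show ?thesis by (rule that)
qed

lemma same_classes_at_union_node:
  assumes v: "v \<in> subtrees T" "is_inner v" "\<not> label v"
    and opt: "\<forall>u\<in>subtrees T. optimal_coloring E (leaves u) \<tau>"
    and classes: "\<forall>c\<in>set (children v). same_color_classes (leaves c) \<tau> \<sigma>"
  obtains \<sigma>' where "proc_step E \<sigma> v \<sigma>'" "same_color_classes (leaves v) \<tau> \<sigma>'"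
proof -
  let ?P = "leaves ` set (children v)"
  obtain cs where cs: "cs \<in> set (children v)"
    and max: "\<forall>c\<in>set (children v). chi E (leaves c) \<le> chi E (leaves cs)"
    using exists_max_chi_child[OF v(1,2)] .
  have palette_cs: "\<tau> ` leaves cs = \<tau> ` leaves v"
    using optimal_coloring_union_max_part[OF finite_leaves _ partition_children[OF v(1,2)]
        no_edges_between_children[OF v(1,3)]] opt v(1) child_node[OF v(1) cs] cs max irreflexive
    by blast
  obtain G where G: "inj_on G (\<tau> ` leaves cs)" "\<forall>x\<in>leaves cs. \<sigma> x = G (\<tau> x)"
    using same_color_classes_renaming classes cs by blast
  \<comment> \<open>Every child is recoloured through \<open>\<tau>\<close>, whose palette on \<open>v\<close> is its palette on \<open>cs\<close>.\<close>
  have "\<forall>C\<in>?P. \<exists>\<phi>. inj_on \<phi> (\<sigma> ` C) \<and> \<phi> ` \<sigma> ` C \<subseteq> \<sigma> ` leaves cs \<and> (\<forall>x\<in>C. \<phi> (\<sigma> x) = G (\<tau> x))"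
  proof
    fix C assume "C \<in> ?P"
    then have "same_color_classes C \<tau> \<sigma>" "\<tau> ` C \<subseteq> \<tau> ` leaves cs"
      using classes palette_cs leaves_child_subset by blast+
    then show "\<exists>\<phi>. inj_on \<phi> (\<sigma> ` C) \<and> \<phi> ` \<sigma> ` C \<subseteq> \<sigma> ` leaves cs \<and> (\<forall>x\<in>C. \<phi> (\<sigma> x) = G (\<tau> x))"
      using same_color_classes_recolor[OF _ _ G] by metis
  qed
  then obtain \<phi> where \<phi>: "\<forall>C\<in>?P. inj_on (\<phi> C) (\<sigma> ` C) \<and> \<phi> C ` \<sigma> ` C \<subseteq> \<sigma> ` leaves cs \<and>
      (\<forall>x\<in>C. \<phi> C (\<sigma> x) = G (\<tau> x))"
    by (metis bchoice)
  then have "\<forall>c\<in>set (children v). c \<noteq> cs \<longrightarrow>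
      inj_on (\<phi> (leaves c)) (\<sigma> ` leaves c) \<and> \<phi> (leaves c) ` \<sigma> ` leaves c \<subseteq> \<sigma> ` leaves cs"
    by blast
  then obtain \<sigma>' where step: "proc_step E \<sigma> v \<sigma>'" and fixed: "\<forall>x\<in>leaves cs. \<sigma>' x = \<sigma> x"
    and recolored: "\<forall>c\<in>set (children v). c \<noteq> cs \<longrightarrow> (\<forall>x\<in>leaves c. \<sigma>' x = \<phi> (leaves c) (\<sigma> x))"
    by (rule proc_step_union_nodeI[OF v cs max])
  have "\<forall>x\<in>leaves v. \<sigma>' x = G (\<tau> x)"
  proof
    fix x assume "x \<in> leaves v"
    then obtain c where c: "c \<in> set (children v)" "x \<in> leaves c"
      using leaves_children[OF v(2)] by blast
    then show "\<sigma>' x = G (\<tau> x)" using fixed recolored G(2) \<phi> by (cases "c = cs") auto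
  qed
  then have "same_color_classes (leaves v) \<tau> \<sigma>'"
    by (rule same_color_classes_if_renaming[OF G(1)[unfolded palette_cs]])
  with step show ?thesis by (rule that)
qed

lemma same_classes_invariant_step:
  assumes inj: "inj_on \<sigma>0 V" and opt: "\<forall>u\<in>subtrees T. optimal_coloring E (leaves u) \<tau>"
    and inv: "run_invariant \<sigma>0 D \<sigma>"
    and classes: "\<forall>u. settled D u \<longrightarrow> same_color_classes (leaves u) \<tau> \<sigma>"
    and ready: "ready D v"
  shows "\<exists>\<sigma>'. proc_step E \<sigma> v \<sigma>' \<and> run_invariant \<sigma>0 (insert v D) \<sigma>' \<and>
    (\<forall>u. settled (insert v D) u \<longrightarrow> same_color_classes (leaves u) \<tau> \<sigma>')"
proof -
  have v: "v \<in> subtrees T" "is_inner v" using ready unfolding ready_def by blast+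
  let ?P = "leaves ` set (children v)"
  have children: "\<forall>c\<in>set (children v). same_color_classes (leaves c) \<tau> \<sigma>"
    using classes ready_child_settled[OF ready] by blast
  obtain \<sigma>' where step: "proc_step E \<sigma> v \<sigma>'" and at_v: "same_color_classes (leaves v) \<tau> \<sigma>'"
  proof (cases "label v")
    case True
    have "\<forall>A\<in>?P. same_color_classes A \<tau> \<sigma>" using children by blast
    moreover have "\<forall>A\<in>?P. \<forall>B\<in>?P. A \<noteq> B \<longrightarrow> \<tau> ` A \<inter> \<tau> ` B = {}"
      using proper_coloring_join_disjoint[OF _ partition_children[OF v]
          all_edges_between_children[OF v(1) True]] opt v(1)
      unfolding optimal_coloring_def by blast
    moreover have "\<forall>A\<in>?P. \<forall>B\<in>?P. A \<noteq> B \<longrightarrow> \<sigma> ` A \<inter> \<sigma> ` B = {}"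
      using ready_children_colors_disjoint[OF inj inv ready] by blast
    ultimately have "same_color_classes (\<Union>?P) \<tau> \<sigma>"
      by (rule same_color_classes_Union)
    then have "same_color_classes (leaves v) \<tau> \<sigma>" using leaves_children[OF v(2)] by simp
    then show ?thesis using that True by (simp add: proc_step_join)
  next
    case False
    then show ?thesis using same_classes_at_union_node[OF v False opt children] that by blast
  qed
  have "same_color_classes (leaves u) \<tau> \<sigma>'" if "settled (insert v D) u" for u
    using that unfolding settled_insert
  proof
    assume "settled D u"
    then show ?thesis
      using classes ready_step_same_classes[OF inv ready step] same_color_classes_trans by blast
  qed (use at_v in simp)
  then show ?thesis using step run_invariant_step[OF inv ready step] by blast
qed

theorem recursively_minimal_procedure_output:
  fixes \<tau> :: "'a \<Rightarrow> 'c"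
  assumes "infinite (UNIV :: 'c set)" and "recursively_minimal E V \<tau>"
  shows "\<exists>\<sigma>. procedure_output E V T \<sigma> \<and> (\<forall>x\<in>V. \<sigma> x = \<tau> x)"
proof -
  have opt: "\<forall>u\<in>subtrees T. optimal_coloring E (leaves u) \<tau>"
    using color_minimal_optimal_on_nodes[OF assms(2)] .
  obtain \<sigma>0 :: "'a \<Rightarrow> 'c" where inj: "inj_on \<sigma>0 V" and fresh: "\<sigma>0 ` V \<inter> \<tau> ` V = {}"
    using inj_on_avoiding[OF assms(1) finite_V finite_imageI[OF finite_V]] .
  obtain vs where order: "bottom_up_order T vs" using bottom_up_order_exists by blast
  let ?Q = "\<lambda>D \<sigma>. run_invariant \<sigma>0 D \<sigma> \<and> (\<forall>u. settled D u \<longrightarrow> same_color_classes (leaves u) \<tau> \<sigma>)"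
  have "?Q {} \<sigma>0"
    using run_invariant_init unfolding settled_def same_color_classes_def
    by (auto simp: not_is_inner_iff)
  then obtain \<sigma> where run: "proc_run E \<sigma>0 vs \<sigma>" and Q: "?Q ({} \<union> set vs) \<sigma>"
    using proc_run_exists[where Q = ?Q, OF ready_list_bottom_up_order[OF order]]
      same_classes_invariant_step[OF inj opt] by blast
  have "settled (set vs) T" using order unfolding bottom_up_order_def settled_def by simp
  then have "same_color_classes V \<tau> \<sigma>" using Q leaves_T by auto
  then obtain f where f: "inj_on f (\<tau> ` V)" "\<forall>x\<in>V. \<sigma> x = f (\<tau> x)"
    by (rule same_color_classes_renaming)
  have "\<forall>p\<in>subtrees T. T \<in> subtrees p \<longrightarrow> T \<noteq> p \<longrightarrow> p \<notin> {} \<union> set vs"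
    using subtrees_antisym by blast
  then have "\<sigma> ` V \<subseteq> \<sigma>0 ` V"
    using Q subtrees_refl[of T] leaves_T unfolding run_invariant_def by blast
  then have "f ` \<tau> ` V \<inter> \<tau> ` V = {}" using f(2) fresh by (auto simp: image_iff) 
  then obtain h where h: "inj h" "\<forall>a\<in>\<tau> ` V. h (f a) = a"
    using inj_undoing_on[OF f(1)] by blast
  have "procedure_output E V T (h \<circ> \<sigma>)"
    unfolding procedure_output_def
    using proc_run_rename[OF h(1) run] order inj_on_subset[OF h(1)] comp_inj_on[OF inj] by blast
  moreover have "\<forall>x\<in>V. (h \<circ> \<sigma>) x = \<tau> x" using f(2) h(2) by simp
  ultimately show ?thesis by blast
qed

end

theorem theorem10:
  fixes E :: "'a \<Rightarrow> 'a \<Rightarrow> bool" and V :: "'a set" and T :: "'a cotree"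
  assumes "graph E V" and "cograph E V" and "is_discriminating_cotree E V T"
  shows "(\<forall>\<sigma> :: 'a \<Rightarrow> 'c. procedure_output E V T \<sigma> \<longrightarrow> recursively_minimal E V \<sigma>)
       \<and> (infinite (UNIV :: 'c set) \<longrightarrow>
           (\<forall>\<sigma> :: 'a \<Rightarrow> 'c. recursively_minimal E V \<sigma> \<longrightarrow>
              (\<exists>\<sigma>'. procedure_output E V T \<sigma>' \<and> (\<forall>x\<in>V. \<sigma>' x = \<sigma> x))))"
proof -
  interpret discriminating_cotree_of_graph E V T
    using assms(1,3) by unfold_locales
  show ?thesis
    using procedure_output_recursively_minimal recursively_minimal_procedure_output by blast
qed

end
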